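(* Let $n\ge2$, $\alpha\in(-n,0)$ and let $\phi$ be a Young function satisfying $\underline\Lambda_\phi(\alpha)<\infty$ and $\overline\Lambda_\phi(\alpha)<\infty$. Suppose $\Omega\subset\mathbb R^n$ is a globally $n$-regular domain with constant $\theta$. Then there exists a constant $C>0$ depending only on $n,\alpha,\phi,\theta$ such that $$\|u\|_{L^{n/|\alpha|}(\Omega)}\le C\|u\|_{\dot{\mathbf B}^{\alpha,\phi}(\Omega)}$$ whenever $u\in\dot{\mathbf B}^{\alpha,\phi}(\Omega)$ satisfies: if $|\Omega|<\infty$, $u\ge0$ in $\Omega$ and $|\{x\in\Omega:u(x)=0\}|\ge\frac12|\Omega|$; if $|\Omega|=\infty$, $u\ge0$ in $\Omega$ and $|\{x\in\Omega:u(x)>a\}|<\infty$ for every $a>0$.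
   Context: A Young function is $\phi\in C([0,\infty))$, convex, with $\phi(0)=0$, $\phi(t)>0$ for $t>0$, $\lim_{t\to\infty}\phi(t)=\infty$. $\underline\Lambda_\phi(\alpha):=\sup_{x>0}\int_0^1\frac{\phi(t^{1-\alpha}x)}{\phi(x)}\frac{dt}{t^{n+1}}$, $\overline\Lambda_\phi(\alpha):=\sup_{x>0}\int_1^\infty\frac{\phi(t^{-\alpha}x)}{\phi(x)}\frac{dt}{t^{n+1}}$. $\dot{\mathbf B}^{\alpha,\phi}(\Omega)$ is the space of measurable $u$ on $\Omega$ with finite $\|u\|_{\dot{\mathbf B}^{\alpha,\phi}(\Omega)}:=\inf\{\lambda>0:\int_\Omega\int_\Omega\phi(\frac{|u(x)-u(y)|}{\lambda|x-y|^{\alpha}})\frac{dx\,dy}{|x-y|^{2n}}\le1\}$. A domain $\Omega$ is globally $n$-regular (with constant $\theta\in(0,1)$) if $|B(x,r)\cap\Omega|\ge\theta r^n$ for all $x\in\Omega$ and all $0<r<2\operatorname{diam}\Omega$. *)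

theory Defs
  imports "HOL-Analysis.Analysis"
begin

definition young_function :: "(real \<Rightarrow> real) \<Rightarrow> bool" where
  "young_function \<phi> \<longleftrightarrow>
     continuous_on {0..} \<phi> \<and> convex_on {0..} \<phi> \<and> \<phi> 0 = 0 \<and>
     (\<forall>t>0. \<phi> t > 0) \<and> filterlim \<phi> at_top at_top"

definition Lambda_lower :: "nat \<Rightarrow> (real \<Rightarrow> real) \<Rightarrow> real \<Rightarrow> ennreal" where
  "Lambda_lower n \<phi> \<alpha> =
     (SUP x\<in>{0<..}. \<integral>\<^sup>+ t\<in>{0<..<1}.
        ennreal (\<phi> (t powr (1 - \<alpha>) * x) / \<phi> x / t ^ (n + 1)) \<partial>lborel)"

definition Lambda_upper :: "nat \<Rightarrow> (real \<Rightarrow> real) \<Rightarrow> real \<Rightarrow> ennreal" where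
  "Lambda_upper n \<phi> \<alpha> =
     (SUP x\<in>{0<..}. \<integral>\<^sup>+ t\<in>{1<..}.
        ennreal (\<phi> (t powr (- \<alpha>) * x) / \<phi> x / t ^ (n + 1)) \<partial>lborel)"

definition besov_modular ::
  "real \<Rightarrow> (real \<Rightarrow> real) \<Rightarrow> 'a::euclidean_space set \<Rightarrow> ('a \<Rightarrow> real) \<Rightarrow> real \<Rightarrow> ennreal" where
  "besov_modular \<alpha> \<phi> \<Omega> u lam =
     (\<integral>\<^sup>+ x\<in>\<Omega>. (\<integral>\<^sup>+ y\<in>\<Omega>.
        ennreal (\<phi> (\<bar>u x - u y\<bar> / (lam * dist x y powr \<alpha>)) / dist x y ^ (2 * DIM('a)))
      \<partial>lebesgue) \<partial>lebesgue)"

definition besov_norm ::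
  "real \<Rightarrow> (real \<Rightarrow> real) \<Rightarrow> 'a::euclidean_space set \<Rightarrow> ('a \<Rightarrow> real) \<Rightarrow> real" where
  "besov_norm \<alpha> \<phi> \<Omega> u = Inf {lam. lam > 0 \<and> besov_modular \<alpha> \<phi> \<Omega> u lam \<le> 1}"

definition in_besov ::
  "real \<Rightarrow> (real \<Rightarrow> real) \<Rightarrow> 'a::euclidean_space set \<Rightarrow> ('a \<Rightarrow> real) \<Rightarrow> bool" where
  "in_besov \<alpha> \<phi> \<Omega> u \<longleftrightarrow>
     set_borel_measurable lebesgue \<Omega> u \<and>
     (\<exists>lam>0. besov_modular \<alpha> \<phi> \<Omega> u lam \<le> 1)"

definition Lp_norm :: "'a::euclidean_space set \<Rightarrow> real \<Rightarrow> ('a \<Rightarrow> real) \<Rightarrow> ennreal" where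
  "Lp_norm \<Omega> p u =
     (let I = (\<integral>\<^sup>+ x\<in>\<Omega>. ennreal (\<bar>u x\<bar> powr p) \<partial>lebesgue)
      in if I = \<infinity> then \<infinity> else ennreal (enn2real I powr (1 / p)))"

text \<open>Domain = nonempty open connected set. Globally n-regular with constant theta;
  diam = infinity for unbounded sets.\<close>
definition globally_regular :: "real \<Rightarrow> 'a::euclidean_space set \<Rightarrow> bool" where
  "globally_regular \<theta> \<Omega> \<longleftrightarrow>
     (\<forall>x\<in>\<Omega>. \<forall>r. 0 < r \<and> (\<not> bounded \<Omega> \<or> r < 2 * diameter \<Omega>) \<longrightarrow>
        emeasure lebesgue (ball x r \<inter> \<Omega>) \<ge> ennreal (\<theta> * r ^ DIM('a)))"

end

theory Submission
  imports Defs
begin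

text \<open>
  If the Besov modular of \<open>u\<close> at scale \<open>\<lambda>\<close> is at most 1, so is that of \<open>v = u / \<lambda>\<close> at scale 1.
  Cut \<open>v\<close> at the dyadic levels \<open>\<epsilon> + c 2^k\<close> and let \<open>m_k\<close> be the measure of \<open>{v > \<epsilon> + c 2^k}\<close>.
  Global regularity of \<open>\<Omega>\<close>, together with the vanishing of \<open>v\<close> on half of \<open>\<Omega>\<close> (or the
  finiteness of its superlevel sets), puts a set of measure \<open>m_k\<close> below level \<open>k\<close> inside the ball
  of radius \<open>R_k\<close>, \<open>\<theta> R_k^n = 2 m_k\<close>, around every point above level \<open>k + 1\<close>. Since convexity
  of \<open>\<phi>\<close> lets a jump be shared among the levels it crosses, the modular bounds
  \<open>\<Sum>_k m_(k+1) \<phi>(c 2^k R_k^|\<alpha>|) / m_k\<close>. Finiteness of the upper index makes \<open>\<phi>\<close> of upper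
  type \<open>q = n / |\<alpha>|\<close>, and an iteration on \<open>a_k = (c 2^k)^q m_k\<close> then bounds \<open>\<Sum>_k a_k\<close>
  independently of \<open>v\<close>, \<open>\<Omega>\<close> and \<open>\<epsilon>\<close>; a layer-cake argument turns this into a bound for the
  integral of \<open>v^q\<close>. Only the upper index is used.
\<close>

section \<open>Young functions of upper type\<close>

lemma young_function_nonneg:
  assumes "young_function \<phi>" "0 \<le> x"
  shows "0 \<le> \<phi> x"
proof (cases "x = 0")
  case True
  then show ?thesis using assms by (simp add: young_function_def)
next
  case False
  then show ?thesis using assms by (auto simp: young_function_def intro: less_imp_le)
qed

lemma young_function_pos:
  assumes "young_function \<phi>" "0 < x"
  shows "0 < \<phi> x"
  using assms by (auto simp: young_function_def)

lemma young_function_scale_le: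
  assumes "young_function \<phi>" "0 \<le> s" "s \<le> 1" "0 \<le> x"
  shows "\<phi> (s * x) \<le> s * \<phi> x"
proof -
  have "convex_on {0..} \<phi>" and "\<phi> 0 = 0"
    using assms(1) by (auto simp: young_function_def)
  moreover have "\<phi> ((1 - s) *\<^sub>R 0 + s *\<^sub>R x) \<le> (1 - s) * \<phi> 0 + s * \<phi> x"
    by (rule convex_onD[OF \<open>convex_on {0..} \<phi>\<close>]) (use assms in auto)
  ultimately show ?thesis by simp
qed

lemma young_function_mono:
  assumes "young_function \<phi>" "0 \<le> a" "a \<le> b"
  shows "\<phi> a \<le> \<phi> b"
proof (cases "b = 0")
  case True
  then show ?thesis using assms by simp
next
  case False
  then have "0 < b" using assms by simp
  have "\<phi> a = \<phi> ((a / b) * b)" using \<open>0 < b\<close> by simp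
  also have "\<dots> \<le> (a / b) * \<phi> b"
    by (rule young_function_scale_le) (use assms \<open>0 < b\<close> in auto)
  also have "\<dots> \<le> \<phi> b"
    using assms \<open>0 < b\<close> young_function_nonneg[OF assms(1), of b]
    by (intro mult_left_le_one_le) auto
  finally show ?thesis .
qed

lemma borel_measurable_young_function_comp:
  assumes "young_function \<phi>" "f \<in> borel_measurable M" "\<And>x. x \<in> space M \<Longrightarrow> 0 \<le> f x"
  shows "(\<lambda>x. \<phi> (f x)) \<in> borel_measurable M"
proof -
  have "continuous_on UNIV (\<lambda>s. \<phi> (max 0 s))"
  proof (rule continuous_on_compose2[of "{0..}" \<phi> UNIV "\<lambda>s. max 0 s"])
    show "continuous_on {0..} \<phi>" using assms(1) by (simp add: young_function_def)
  qed (auto intro: continuous_intros)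
  then have "(\<lambda>s. \<phi> (max 0 s)) \<in> borel_measurable borel"
    by (rule borel_measurable_continuous_onI)
  from measurable_compose[OF assms(2) this]
  have "(\<lambda>x. \<phi> (max 0 (f x))) \<in> borel_measurable M" .
  then show ?thesis
    by (rule measurable_cong[THEN iffD2, rotated]) (simp add: assms(3))
qed

lemma young_function_exceeds:
  assumes "young_function \<phi>"
  obtains z where "0 < z" "y \<le> \<phi> z"
proof -
  have "filterlim \<phi> at_top at_top" using assms by (simp add: young_function_def)
  then have "eventually (\<lambda>x. y \<le> \<phi> x) at_top" by (simp add: filterlim_at_top)
  then obtain N where "\<And>x. N \<le> x \<Longrightarrow> y \<le> \<phi> x" by (auto simp: eventually_at_top_linorder)
  then show ?thesis using that[of "max N 1"] by simp
qed

definition upper_type :: "nat \<Rightarrow> real \<Rightarrow> real \<Rightarrow> (real \<Rightarrow> real) \<Rightarrow> bool" where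
  "upper_type n \<beta> K \<phi> \<longleftrightarrow> (\<forall>x>0. \<forall>T\<ge>1. \<phi> (T powr \<beta> * x) \<le> K * T ^ n * \<phi> x)"

lemma upper_typeD:
  "upper_type n \<beta> K \<phi> \<Longrightarrow> 0 < x \<Longrightarrow> 1 \<le> T \<Longrightarrow> \<phi> (T powr \<beta> * x) \<le> K * T ^ n * \<phi> x"
  unfolding upper_type_def by blast

lemma upper_type_ge_one:
  assumes "young_function \<phi>" "upper_type n \<beta> K \<phi>"
  shows "1 \<le> K"
proof -
  have "\<phi> 1 \<le> K * \<phi> 1"
    using upper_typeD[OF assms(2), of 1 1] by simp
  then show ?thesis using young_function_pos[OF assms(1), of 1] by simp
qed

text \<open>On \<open>(T, 2T)\<close> the integrand of \<open>Lambda_upper\<close> is at least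
  \<open>\<phi>(T^(-\<alpha>) x) / \<phi>(x) / (2T)^(n+1)\<close>, so the integral over this interval bounds
  \<open>\<phi>(T^(-\<alpha>) x) / \<phi>(x)\<close> by a multiple of \<open>T^n\<close>.\<close>
lemma Lambda_upper_imp_upper_type:
  fixes \<phi> :: "real \<Rightarrow> real"
  assumes yf: "young_function \<phi>" and \<alpha>: "\<alpha> < 0" and fin: "Lambda_upper n \<phi> \<alpha> < \<infinity>"
  obtains K where "upper_type n (- \<alpha>) K \<phi>"
proof -
  define L where "L = enn2real (Lambda_upper n \<phi> \<alpha>)"
  have L: "Lambda_upper n \<phi> \<alpha> = ennreal L"
    using fin unfolding L_def by (simp add: less_top[symmetric] ennreal_enn2real_if)
  have bound: "\<phi> (T powr (-\<alpha>) * x) \<le> (L * 2 ^ (n + 1)) * T ^ n * \<phi> x"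
    if x: "0 < x" and T: "1 \<le> T" for x T
  proof -
    define c where "c = \<phi> (T powr (-\<alpha>) * x) / \<phi> x / (2 * T) ^ (n + 1)"
    have px: "0 < \<phi> x" using young_function_pos[OF yf x] .
    have c0: "0 \<le> c"
      unfolding c_def using young_function_nonneg[OF yf, of "T powr (-\<alpha>) * x"] px T x by auto
    have below: "ennreal c * indicator {T<..<2 * T} t
        \<le> ennreal (\<phi> (t powr (- \<alpha>) * x) / \<phi> x / t ^ (n + 1)) * indicator {1<..} t" for t
    proof (cases "t \<in> {T<..<2 * T}")
      case True
      then have t: "T < t" "t < 2 * T" "1 < t" using T by auto
      have "\<phi> (T powr (-\<alpha>) * x) \<le> \<phi> (t powr (-\<alpha>) * x)"
        using x T t \<alpha> by (intro young_function_mono[OF yf] mult_right_mono powr_mono2) auto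
      moreover have "t ^ (n + 1) \<le> (2 * T) ^ (n + 1)" using t T by (intro power_mono) auto
      ultimately have "c \<le> \<phi> (t powr (- \<alpha>) * x) / \<phi> x / t ^ (n + 1)"
        unfolding c_def using px t T young_function_nonneg[OF yf, of "T powr (-\<alpha>) * x"] x
        by (intro frac_le divide_right_mono) auto
      then show ?thesis using True t by (auto intro: ennreal_leI)
    qed simp
    have "ennreal c * ennreal T = (\<integral>\<^sup>+ t. ennreal c * indicator {T<..<2 * T} t \<partial>lborel)"
      using T by (simp add: nn_integral_cmult_indicator)
    also have "\<dots> \<le> (\<integral>\<^sup>+ t\<in>{1<..}. ennreal (\<phi> (t powr (- \<alpha>) * x) / \<phi> x / t ^ (n + 1)) \<partial>lborel)"
      by (rule nn_integral_mono) (use below in simp)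
    also have "\<dots> \<le> Lambda_upper n \<phi> \<alpha>"
      unfolding Lambda_upper_def by (rule SUP_upper2[of x]) (use x in auto)
    finally have "ennreal (c * T) \<le> ennreal L" using L c0 T by (simp add: ennreal_mult)
    then have "c * T \<le> L" using ennreal_le_iff[of L "c * T"] by (simp add: L_def)
    then have "\<phi> (T powr (-\<alpha>) * x) \<le> L * (2 * T) ^ (n + 1) / T * \<phi> x"
      using px T by (simp add: c_def field_simps)
    also have "L * (2 * T) ^ (n + 1) / T = L * 2 ^ (n + 1) * T ^ n"
      using T by (simp add: power_mult_distrib field_simps)
    finally show ?thesis .
  qed
  show ?thesis
    by (rule that[of "L * 2 ^ (n + 1)"]) (use bound in \<open>auto simp: upper_type_def\<close>)
qed

lemma upper_type_kernel_le:
  fixes \<phi> :: "real \<Rightarrow> real"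
  assumes yf: "young_function \<phi>" and upper: "upper_type n \<beta> K \<phi>"
    and d: "0 < d" "d < r" and t: "0 \<le> t"
  shows "\<phi> (t * r powr \<beta>) / (K * r ^ (2 * n)) \<le> \<phi> (t * d powr \<beta>) / d ^ (2 * n)"
proof (cases "t = 0")
  case True
  then show ?thesis using yf by (simp add: young_function_def)
next
  case False
  define T where "T = r / d"
  have "1 \<le> T" "0 < r" using d by (auto simp: T_def)
  have "T powr \<beta> * (t * d powr \<beta>) = t * r powr \<beta>"
    using d by (simp add: T_def powr_divide)
  moreover have "\<phi> (T powr \<beta> * (t * d powr \<beta>)) \<le> K * T ^ n * \<phi> (t * d powr \<beta>)"
    using False t d \<open>1 \<le> T\<close> by (intro upper_typeD[OF upper]) auto
  ultimately have "\<phi> (t * r powr \<beta>) \<le> K * T ^ n * \<phi> (t * d powr \<beta>)"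
    by (simp only:)
  then have "\<phi> (t * r powr \<beta>) / (K * r ^ (2 * n)) \<le> T ^ n * \<phi> (t * d powr \<beta>) / r ^ (2 * n)"
    using upper_type_ge_one[OF yf upper] \<open>0 < r\<close> by (simp add: divide_le_eq field_simps)
  also have "\<dots> = \<phi> (t * d powr \<beta>) / (d ^ n * r ^ n)"
    using d \<open>0 < r\<close> by (simp add: T_def power_divide power_mult field_simps power2_eq_square)
  also have "\<dots> \<le> \<phi> (t * d powr \<beta>) / d ^ (2 * n)"
  proof -
    have "d ^ (2 * n) \<le> d ^ n * r ^ n"
      using d by (simp add: mult_2 power_add mult_left_mono power_mono)
    then show ?thesis
      using d young_function_nonneg[OF yf, of "t * d powr \<beta>"] t by (intro divide_left_mono) auto
  qed
  finally show ?thesis .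
qed

section \<open>Dyadic level sums\<close>

lemma sum_dyadic_below_le:
  fixes c E :: real
  assumes c: "0 < c" and E: "0 \<le> E"
  shows "(\<Sum>k<N. if c * 2 ^ k \<le> E then c * 2 ^ k else 0) \<le> 2 * E"
proof -
  have "(\<Sum>k<N. if c * 2 ^ k \<le> E then c * 2 ^ k else 0) \<le> c * 2 ^ N - c \<and>
        (\<Sum>k<N. if c * 2 ^ k \<le> E then c * 2 ^ k else 0) \<le> 2 * E"
  proof (induction N)
    case 0
    then show ?case using E by simp
  next
    case (Suc N)
    let ?S = "\<Sum>k<N. if c * 2 ^ k \<le> E then c * 2 ^ k else 0"
    have sum_Suc: "(\<Sum>k<Suc N. if c * 2 ^ k \<le> E then c * 2 ^ k else 0)
        = ?S + (if c * 2 ^ N \<le> E then c * 2 ^ N else 0)"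
      by simp
    have pow_Suc: "c * 2 ^ Suc N = 2 * (c * 2 ^ N)" by simp
    have IH: "?S \<le> c * 2 ^ N - c" "?S \<le> 2 * E" using Suc.IH by auto
    have "c \<le> c * 2 ^ N" using c by simp
    show ?case
    proof (cases "c * 2 ^ N \<le> E")
      case True
      show ?thesis unfolding sum_Suc pow_Suc if_P[OF True]
        using IH True \<open>c \<le> c * 2 ^ N\<close> c by (intro conjI) linarith+
    next
      case False
      show ?thesis unfolding sum_Suc pow_Suc if_not_P[OF False]
        using IH \<open>c \<le> c * 2 ^ N\<close> c by (intro conjI) linarith+
    qed
  qed
  then show ?thesis by simp
qed

text \<open>For \<open>b < a\<close>, the dyadic levels \<open>\<epsilon> + c 2^k\<close> crossed by the jump from \<open>b\<close> to \<open>a\<close>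
  have \<open>c 2^k < a - b\<close>; by convexity each contributes at most \<open>c 2^k / (a - b)\<close> times the
  full term, and these fractions add up to less than 2.\<close>
lemma sum_dyadic_crossings_le:
  fixes \<phi> :: "real \<Rightarrow> real"
  assumes yf: "young_function \<phi>" and c: "0 < c" and d: "0 \<le> d"
  shows "(\<Sum>k<N. if \<epsilon> + c * 2 ^ Suc k < a \<and> b \<le> \<epsilon> + c * 2 ^ k
                  then \<phi> (c * 2 ^ k * d powr \<beta>) / d ^ m else 0)
         \<le> 2 * (\<phi> (\<bar>a - b\<bar> * d powr \<beta>) / d ^ m)"
proof (cases "b < a")
  case False
  have no_crossing: "\<not> (\<epsilon> + c * 2 ^ Suc k < a \<and> b \<le> \<epsilon> + c * 2 ^ k)" for k
  proof -
    have "c * 2 ^ k \<le> c * 2 ^ Suc k" using c by simp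
    then show ?thesis using False by linarith
  qed
  have "(if \<epsilon> + c * 2 ^ Suc k < a \<and> b \<le> \<epsilon> + c * 2 ^ k
         then \<phi> (c * 2 ^ k * d powr \<beta>) / d ^ m else 0) = 0" for k
    by (rule if_not_P) (rule no_crossing)
  then show ?thesis
    using d young_function_nonneg[OF yf, of "\<bar>a - b\<bar> * d powr \<beta>"]
    by (simp only: sum.neutral_const) simp
next
  case True
  define E where "E = a - b"
  have E: "0 < E" using True by (simp add: E_def)
  define Q where "Q = \<phi> (E * d powr \<beta>) / (E * d ^ m)"
  have Q: "0 \<le> Q"
    unfolding Q_def using E d young_function_nonneg[OF yf, of "E * d powr \<beta>"] by simp
  have term_le: "(if \<epsilon> + c * 2 ^ Suc k < a \<and> b \<le> \<epsilon> + c * 2 ^ k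
                  then \<phi> (c * 2 ^ k * d powr \<beta>) / d ^ m else 0)
      \<le> (if c * 2 ^ k \<le> E then c * 2 ^ k else 0) * Q" for k
  proof (cases "\<epsilon> + c * 2 ^ Suc k < a \<and> b \<le> \<epsilon> + c * 2 ^ k")
    case True
    then have le: "c * 2 ^ k \<le> E" unfolding E_def by simp
    have "\<phi> (c * 2 ^ k * d powr \<beta>) = \<phi> ((c * 2 ^ k / E) * (E * d powr \<beta>))"
      using E by (simp add: mult.assoc)
    also have "\<dots> \<le> (c * 2 ^ k / E) * \<phi> (E * d powr \<beta>)"
      using E le c d by (intro young_function_scale_le[OF yf]) auto
    finally have "\<phi> (c * 2 ^ k * d powr \<beta>) / d ^ m \<le> (c * 2 ^ k / E) * \<phi> (E * d powr \<beta>) / d ^ m"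
      by (rule divide_right_mono) (use d in simp)
    then show ?thesis using True le E by (simp add: Q_def)
  qed (use Q c in auto)
  then have "(\<Sum>k<N. if \<epsilon> + c * 2 ^ Suc k < a \<and> b \<le> \<epsilon> + c * 2 ^ k
                  then \<phi> (c * 2 ^ k * d powr \<beta>) / d ^ m else 0)
      \<le> (\<Sum>k<N. if c * 2 ^ k \<le> E then c * 2 ^ k else 0) * Q"
    by (simp add: sum_distrib_right sum_mono del: power_Suc)
  also have "\<dots> \<le> 2 * E * Q"
    using sum_dyadic_below_le[OF c, of E N] E Q by (intro mult_right_mono) auto
  also have "2 * E * Q = 2 * (\<phi> (\<bar>a - b\<bar> * d powr \<beta>) / d ^ m)"
  proof -
    have "E * Q = \<phi> (E * d powr \<beta>) / d ^ m" unfolding Q_def using E by simp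
    moreover have "\<bar>a - b\<bar> = E" using True by (simp add: E_def)
    ultimately show ?thesis by simp
  qed
  finally show ?thesis .
qed

lemma suminf_dyadic_crossings_le:
  fixes \<phi> :: "real \<Rightarrow> real"
  assumes yf: "young_function \<phi>" and c: "0 < c" and d: "0 \<le> d"
  shows "(\<Sum>k. ennreal (if \<epsilon> + c * 2 ^ Suc k < a \<and> b \<le> \<epsilon> + c * 2 ^ k
                        then \<phi> (c * 2 ^ k * d powr \<beta>) / d ^ m else 0))
         \<le> 2 * ennreal (\<phi> (\<bar>a - b\<bar> * d powr \<beta>) / d ^ m)"
proof -
  define T where "T k = (if \<epsilon> + c * 2 ^ Suc k < a \<and> b \<le> \<epsilon> + c * 2 ^ k
      then \<phi> (c * 2 ^ k * d powr \<beta>) / d ^ m else 0)" for k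
  have T: "0 \<le> T k" for k
    unfolding T_def using c d by (auto intro!: divide_nonneg_nonneg young_function_nonneg[OF yf])
  have "(\<Sum>k. ennreal (T k)) \<le> ennreal (2 * (\<phi> (\<bar>a - b\<bar> * d powr \<beta>) / d ^ m))"
  proof (rule suminf_le_const[OF summableI])
    fix N
    have "(\<Sum>k<N. ennreal (T k)) = ennreal (\<Sum>k<N. T k)" using T by (intro sum_ennreal)
    also have "\<dots> \<le> ennreal (2 * (\<phi> (\<bar>a - b\<bar> * d powr \<beta>) / d ^ m))"
      unfolding T_def by (intro ennreal_leI sum_dyadic_crossings_le[OF yf c d])
    finally show "(\<Sum>k<N. ennreal (T k)) \<le> ennreal (2 * (\<phi> (\<bar>a - b\<bar> * d powr \<beta>) / d ^ m))" .
  qed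
  also have "\<dots> = 2 * ennreal (\<phi> (\<bar>a - b\<bar> * d powr \<beta>) / d ^ m)"
    using d young_function_nonneg[OF yf, of "\<bar>a - b\<bar> * d powr \<beta>"] by (subst ennreal_mult) auto
  finally show ?thesis unfolding T_def .
qed

lemma powr_inverse_mult:
  fixes t q x :: real
  assumes "0 < t" "0 < q" "0 \<le> x"
  shows "t * x powr (1 / q) = (t powr q * x) powr (1 / q)"
  using assms by (simp add: powr_mult powr_powr)

text \<open>Write \<open>a_k = (c 2^k)^q m_k\<close>. While \<open>a_k \<le> A_0 / 2^q\<close> we have \<open>a_(k+1) \<le> 2^q a_k \<le> A_0\<close>;
  beyond that, the \<open>\<phi>\<close>-term of the energy exceeds \<open>2^q C'\<close>, so the energy bound forces
  \<open>m_(k+1) \<le> 2^(-q) m_k\<close>, that is \<open>a_(k+1) \<le> a_k\<close>.\<close>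
lemma dyadic_level_mass_le:
  fixes \<phi> :: "real \<Rightarrow> real" and m :: "nat \<Rightarrow> real"
  assumes yf: "young_function \<phi>" and q: "0 < q" and \<theta>: "0 < \<theta>" and c: "0 < c"
    and m_nonneg: "\<And>k. 0 \<le> m k" and m_mono: "\<And>k. m (Suc k) \<le> m k"
    and energy: "\<And>k. m (Suc k) * \<phi> (c * 2 ^ k * ((2 / \<theta>) * m k) powr (1 / q)) / m k \<le> C'"
    and C': "0 < C'" and A\<^sub>0: "0 < A\<^sub>0"
    and large: "2 powr q * C' \<le> \<phi> (((2 / \<theta>) * (A\<^sub>0 / 2 powr q)) powr (1 / q))"
    and base: "c powr q * m 0 \<le> A\<^sub>0"
  shows "(c * 2 ^ k) powr q * m k \<le> A\<^sub>0"
proof (induction k)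
  case 0
  then show ?case using base by simp
next
  case (Suc k)
  define a where "a = (c * 2 ^ k) powr q * m k"
  have a_Suc: "(c * 2 ^ Suc k) powr q * m (Suc k) = 2 powr q * ((c * 2 ^ k) powr q * m (Suc k))"
    using c by (simp add: powr_mult)
  show ?case
  proof (cases "a \<le> A\<^sub>0 / 2 powr q")
    case True
    have "2 powr q * ((c * 2 ^ k) powr q * m (Suc k)) \<le> 2 powr q * a"
      unfolding a_def using m_mono[of k] by (simp add: mult_left_mono)
    also have "\<dots> \<le> A\<^sub>0" using True by (simp add: field_simps)
    finally show ?thesis unfolding a_Suc .
  next
    case False
    then have "0 < m k"
      using A\<^sub>0 m_nonneg[of k] by (cases "m k = 0") (auto simp: a_def)
    have w: "c * 2 ^ k * ((2 / \<theta>) * m k) powr (1 / q) = ((2 / \<theta>) * a) powr (1 / q)"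
      unfolding a_def using c q \<theta> m_nonneg[of k]
      by (subst powr_inverse_mult) (auto simp: mult_ac)
    have "(2 / \<theta>) * (A\<^sub>0 / 2 powr q) \<le> (2 / \<theta>) * a"
      using False \<theta> by (intro mult_left_mono) auto
    then have "((2 / \<theta>) * (A\<^sub>0 / 2 powr q)) powr (1 / q) \<le> ((2 / \<theta>) * a) powr (1 / q)"
      using \<theta> A\<^sub>0 q by (intro powr_mono2) auto
    then have "\<phi> (((2 / \<theta>) * (A\<^sub>0 / 2 powr q)) powr (1 / q)) \<le> \<phi> (c * 2 ^ k * ((2 / \<theta>) * m k) powr (1 / q))"
      unfolding w by (rule young_function_mono[OF yf powr_ge_zero])
    with large have "2 powr q * C' \<le> \<phi> (c * 2 ^ k * ((2 / \<theta>) * m k) powr (1 / q))"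
      by (rule order_trans)
    then have "m (Suc k) * (2 powr q * C') \<le> m (Suc k) * \<phi> (c * 2 ^ k * ((2 / \<theta>) * m k) powr (1 / q))"
      using m_nonneg by (rule mult_left_mono)
    also have "\<dots> \<le> C' * m k"
      using energy[of k] \<open>0 < m k\<close> by (simp add: divide_le_eq)
    finally have "m (Suc k) * (2 powr q * C') \<le> C' * m k" .
    then have "2 powr q * m (Suc k) \<le> m k" using C' by (simp add: mult_ac)
    then have "(c * 2 ^ k) powr q * (2 powr q * m (Suc k)) \<le> (c * 2 ^ k) powr q * m k"
      by (rule mult_left_mono) simp
    then have "(c * 2 ^ Suc k) powr q * m (Suc k) \<le> a"
      unfolding a_Suc a_def by (simp add: mult_ac)
    then show ?thesis using Suc.IH by (simp add: a_def)
  qed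
qed

text \<open>The upper type with \<open>T^n = A_0 / a_k \<ge> 1\<close> compares the energy term with the fixed value
  \<open>\<phi>(((2/\<theta>) A_0)^(1/q))\<close>.\<close>
lemma dyadic_level_mass_step:
  fixes \<phi> :: "real \<Rightarrow> real" and m :: "nat \<Rightarrow> real"
  assumes yf: "young_function \<phi>" and n: "0 < n" and \<beta>: "0 < \<beta>" and q: "q = n / \<beta>"
    and upper: "upper_type n \<beta> K \<phi>" and \<theta>: "0 < \<theta>" and c: "0 < c"
    and m_nonneg: "0 \<le> m (Suc k)" and m_mono: "m (Suc k) \<le> m k" and A\<^sub>0: "0 < A\<^sub>0"
    and bounded: "(c * 2 ^ k) powr q * m k \<le> A\<^sub>0"
  shows "(c * 2 ^ Suc k) powr q * m (Suc k) * \<phi> (((2 / \<theta>) * A\<^sub>0) powr (1 / q))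
         \<le> 2 powr q * K * A\<^sub>0 * (m (Suc k) * \<phi> (c * 2 ^ k * ((2 / \<theta>) * m k) powr (1 / q)) / m k)"
proof (cases "m k = 0")
  case True
  then have "m (Suc k) = 0" using m_mono m_nonneg by simp
  then show ?thesis by simp
next
  case False
  then have mk: "0 < m k" using m_mono m_nonneg by simp
  define a where "a = (c * 2 ^ k) powr q * m k"
  have a: "0 < a" unfolding a_def using mk c by simp
  have q0: "0 < q" using q n \<beta> by simp
  have w: "c * 2 ^ k * ((2 / \<theta>) * m k) powr (1 / q) = ((2 / \<theta>) * a) powr (1 / q)"
    unfolding a_def using c q0 \<theta> mk by (subst powr_inverse_mult) (auto simp: mult_ac)
  define T where "T = (A\<^sub>0 / a) powr (1 / n)"
  have T: "1 \<le> T" unfolding T_def using bounded a by (intro ge_one_powr_ge_zero) (auto simp: a_def)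
  have Tn: "T ^ n = A\<^sub>0 / a"
    unfolding T_def using A\<^sub>0 a n by (simp add: powr_realpow'[symmetric] powr_powr)
  have "T powr \<beta> = (A\<^sub>0 / a) powr (1 / q)"
    unfolding T_def using q n \<beta> by (simp add: powr_powr)
  moreover note powr_mult[of "A\<^sub>0 / a" "(2 / \<theta>) * a" "1 / q"]
  ultimately have "T powr \<beta> * ((2 / \<theta>) * a) powr (1 / q) = ((A\<^sub>0 / a) * ((2 / \<theta>) * a)) powr (1 / q)"
    by simp
  also have "\<dots> = ((2 / \<theta>) * A\<^sub>0) powr (1 / q)" using a by (simp add: mult.commute)
  finally have "\<phi> (((2 / \<theta>) * A\<^sub>0) powr (1 / q)) \<le> K * (A\<^sub>0 / a) * \<phi> (((2 / \<theta>) * a) powr (1 / q))"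
    using upper_typeD[OF upper _ T, of "((2 / \<theta>) * a) powr (1 / q)"] a \<theta> Tn by simp
  then have aW: "a * \<phi> (((2 / \<theta>) * A\<^sub>0) powr (1 / q)) \<le> K * A\<^sub>0 * \<phi> (((2 / \<theta>) * a) powr (1 / q))"
    using a by (simp add: field_simps)
  have "(c * 2 ^ Suc k) powr q * m (Suc k) = 2 powr q * (m (Suc k) / m k) * a"
    unfolding a_def using c mk by (simp add: powr_mult)
  then have "(c * 2 ^ Suc k) powr q * m (Suc k) * \<phi> (((2 / \<theta>) * A\<^sub>0) powr (1 / q))
      = 2 powr q * (m (Suc k) / m k) * (a * \<phi> (((2 / \<theta>) * A\<^sub>0) powr (1 / q)))"
    by (simp only: mult.assoc)
  also have "\<dots> \<le> 2 powr q * (m (Suc k) / m k) * (K * A\<^sub>0 * \<phi> (((2 / \<theta>) * a) powr (1 / q)))"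
    using aW m_nonneg mk by (intro mult_left_mono) auto
  also have "\<dots> = 2 powr q * K * A\<^sub>0 * (m (Suc k) * \<phi> (c * 2 ^ k * ((2 / \<theta>) * m k) powr (1 / q)) / m k)"
    unfolding w by simp
  finally show ?thesis .
qed

lemma dyadic_level_masses_sum_le:
  fixes \<phi> :: "real \<Rightarrow> real" and m :: "nat \<Rightarrow> real"
  assumes yf: "young_function \<phi>" and n: "0 < n" and \<beta>: "0 < \<beta>" and q: "q = n / \<beta>"
    and upper: "upper_type n \<beta> K \<phi>" and \<theta>: "0 < \<theta>" and c: "0 < c"
    and m_nonneg: "\<And>k. 0 \<le> m k" and m_mono: "\<And>k. m (Suc k) \<le> m k"
    and energy: "\<And>N. (\<Sum>k<N. m (Suc k) * \<phi> (c * 2 ^ k * ((2 / \<theta>) * m k) powr (1 / q)) / m k) \<le> C'"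
    and C': "0 < C'" and A\<^sub>0: "0 < A\<^sub>0"
    and large: "2 powr q * C' \<le> \<phi> (((2 / \<theta>) * (A\<^sub>0 / 2 powr q)) powr (1 / q))"
    and base: "c powr q * m 0 \<le> A\<^sub>0"
  shows "(\<Sum>k<N. (c * 2 ^ k) powr q * m k)
         \<le> A\<^sub>0 + 2 powr q * K * A\<^sub>0 * C' / \<phi> (((2 / \<theta>) * A\<^sub>0) powr (1 / q))"
proof -
  define e where "e k = m (Suc k) * \<phi> (c * 2 ^ k * ((2 / \<theta>) * m k) powr (1 / q)) / m k" for k
  define W where "W = \<phi> (((2 / \<theta>) * A\<^sub>0) powr (1 / q))"
  have q0: "0 < q" using q n \<beta> by simp
  have W: "0 < W" unfolding W_def using \<theta> A\<^sub>0 by (intro young_function_pos[OF yf]) simp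
  have K: "0 < K" using upper_type_ge_one[OF yf upper] by simp
  have e_nonneg: "0 \<le> e k" for k
    unfolding e_def using m_nonneg c by (intro divide_nonneg_nonneg mult_nonneg_nonneg
        young_function_nonneg[OF yf]) auto
  have e_le: "e k \<le> C'" for k
    using member_le_sum[of k "{..<Suc k}" e] e_nonneg energy[of "Suc k"] by (simp add: e_def)
  have bounded: "(c * 2 ^ k) powr q * m k \<le> A\<^sub>0" for k
    using e_le unfolding e_def
    by (rule dyadic_level_mass_le[OF yf q0 \<theta> c m_nonneg m_mono _ C' A\<^sub>0 large base])
  have step: "(c * 2 ^ Suc k) powr q * m (Suc k) \<le> 2 powr q * K * A\<^sub>0 * e k / W" for k
  proof -
    have "(c * 2 ^ Suc k) powr q * m (Suc k) * W \<le> 2 powr q * K * A\<^sub>0 * e k"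
      using dyadic_level_mass_step[OF yf n \<beta> q upper \<theta> c m_nonneg m_mono A\<^sub>0 bounded]
      unfolding e_def W_def .
    then show ?thesis using W by (simp add: le_divide_eq)
  qed
  have "(\<Sum>k<N. (c * 2 ^ k) powr q * m k) \<le> (\<Sum>k<Suc N. (c * 2 ^ k) powr q * m k)"
    using m_nonneg by (intro sum_mono2) auto
  also have "\<dots> = c powr q * m 0 + (\<Sum>k<N. (c * 2 ^ Suc k) powr q * m (Suc k))"
    by (subst sum.lessThan_Suc_shift) simp
  also have "\<dots> \<le> A\<^sub>0 + (\<Sum>k<N. 2 powr q * K * A\<^sub>0 * e k / W)"
    using base step by (intro add_mono sum_mono) auto
  also have "(\<Sum>k<N. 2 powr q * K * A\<^sub>0 * e k / W) = 2 powr q * K * A\<^sub>0 / W * (\<Sum>k<N. e k)"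
    by (simp add: sum_distrib_left sum_divide_distrib)
  also have "\<dots> \<le> 2 powr q * K * A\<^sub>0 / W * C'"
    using energy[of N] W K A\<^sub>0 unfolding e_def by (intro mult_left_mono) auto
  finally show ?thesis by (simp add: W_def)
qed

section \<open>Energy across level sets\<close>

lemma sigma_finite_lebesgue: "sigma_finite_measure (lebesgue :: 'a::euclidean_space measure)"
  unfolding sigma_finite_measure_def
proof (intro exI[of _ "range (\<lambda>n::nat. cball (0::'a) (real n))"] conjI ballI)
  show "\<Union> (range (\<lambda>n::nat. cball (0::'a) (real n))) = space lebesgue"
    by (auto simp: dist_norm) (metis real_arch_simple)
next
  fix A assume "A \<in> range (\<lambda>n::nat. cball (0::'a) (real n))"
  then obtain n :: nat where "A = cball 0 (real n)" by auto
  then show "emeasure lebesgue A \<noteq> \<infinity>"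
    using emeasure_bounded_finite[OF bounded_cball, of "0::'a" "real n"] by simp
qed auto

lemma ennreal_measure_le_emeasure: "ennreal (measure M A) \<le> emeasure M A"
  by (cases "emeasure M A = \<infinity>") (auto simp: measure_def ennreal_enn2real_if)

lemma suminf_iterated_set_nn_integral:
  fixes f :: "nat \<Rightarrow> 'a \<times> 'a \<Rightarrow> ennreal"
  assumes "sigma_finite_measure M" and A[measurable]: "A \<in> sets M"
    and f[measurable]: "\<And>k. f k \<in> borel_measurable (M \<Otimes>\<^sub>M M)"
  shows "(\<Sum>k. \<integral>\<^sup>+x\<in>A. (\<integral>\<^sup>+y\<in>A. f k (x, y) \<partial>M) \<partial>M)
       = (\<integral>\<^sup>+x\<in>A. (\<integral>\<^sup>+y\<in>A. (\<Sum>k. f k (x, y)) \<partial>M) \<partial>M)"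
proof -
  interpret M: sigma_finite_measure M by fact
  have inner: "(\<lambda>y. f k (x, y) * indicator A y) \<in> borel_measurable M" if "x \<in> space M" for k x
    using that by measurable
  have "(\<lambda>(x, y). f k (x, y) * indicator A y) \<in> borel_measurable (M \<Otimes>\<^sub>M M)" for k
    by measurable
  then have outer: "(\<lambda>x. (\<integral>\<^sup>+y. f k (x, y) * indicator A y \<partial>M) * indicator A x) \<in> borel_measurable M" for k
    using M.borel_measurable_nn_integral by measurable
  have "(\<Sum>k. \<integral>\<^sup>+x\<in>A. (\<integral>\<^sup>+y\<in>A. f k (x, y) \<partial>M) \<partial>M)
      = (\<integral>\<^sup>+x. (\<Sum>k. (\<integral>\<^sup>+y. f k (x, y) * indicator A y \<partial>M) * indicator A x) \<partial>M)"
    by (rule nn_integral_suminf[symmetric]) (rule outer)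
  also have "\<dots> = (\<integral>\<^sup>+x\<in>A. (\<integral>\<^sup>+y\<in>A. (\<Sum>k. f k (x, y)) \<partial>M) \<partial>M)"
  proof (rule nn_integral_cong)
    fix x assume "x \<in> space M"
    have "(\<Sum>k. (\<integral>\<^sup>+y. f k (x, y) * indicator A y \<partial>M)) = (\<integral>\<^sup>+y. (\<Sum>k. f k (x, y) * indicator A y) \<partial>M)"
      by (rule nn_integral_suminf[symmetric]) (rule inner[OF \<open>x \<in> space M\<close>])
    then show "(\<Sum>k. (\<integral>\<^sup>+y. f k (x, y) * indicator A y \<partial>M) * indicator A x)
        = (\<integral>\<^sup>+y\<in>A. (\<Sum>k. f k (x, y)) \<partial>M) * indicator A x"
      by (simp add: ennreal_suminf_multc)
  qed
  finally show ?thesis .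
qed

lemma measure_superlevel_antimono:
  fixes \<Omega> :: "'a::euclidean_space set" and v :: "'a \<Rightarrow> real"
  assumes fin: "\<forall>a>0. emeasure lebesgue {x\<in>\<Omega>. a < v x} < \<infinity>" and ab: "0 < a" "a \<le> b"
    and [measurable]: "\<Omega> \<in> sets lebesgue" "v \<in> borel_measurable lebesgue"
  shows "measure lebesgue {x\<in>\<Omega>. b < v x} \<le> measure lebesgue {x\<in>\<Omega>. a < v x}"
proof (rule measure_mono_fmeasurable)
  show "{x\<in>\<Omega>. b < v x} \<subseteq> {x\<in>\<Omega>. a < v x}" using ab by auto
  show "{x\<in>\<Omega>. b < v x} \<in> sets lebesgue" by measurable
  show "{x\<in>\<Omega>. a < v x} \<in> fmeasurable lebesgue"
    using fin ab unfolding fmeasurable_def by simp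
qed

lemma suminf_ennreal_mult_emeasure_le:
  assumes "\<And>N. (\<Sum>k<N. a k * measure M (A k)) \<le> S" "\<And>k. 0 \<le> a k" "\<And>k. emeasure M (A k) \<noteq> \<infinity>"
  shows "(\<Sum>k. ennreal (a k) * emeasure M (A k)) \<le> ennreal S"
proof (rule suminf_le_const[OF summableI])
  fix N
  have "(\<Sum>k<N. ennreal (a k) * emeasure M (A k)) = (\<Sum>k<N. ennreal (a k * measure M (A k)))"
    using assms(2,3) by (simp add: emeasure_eq_ennreal_measure ennreal_mult)
  also have "\<dots> = ennreal (\<Sum>k<N. a k * measure M (A k))"
    using assms(2) by (intro sum_ennreal) simp
  also have "\<dots> \<le> ennreal S" using assms(1) by (rule ennreal_leI)
  finally show "(\<Sum>k<N. ennreal (a k) * emeasure M (A k)) \<le> ennreal S" .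
qed

text \<open>A point with \<open>2\<epsilon> < v x\<close> lies above the highest level \<open>\<epsilon> + c 2^k\<close> below \<open>v x\<close>, and
  \<open>v x \<le> 2 (v x - \<epsilon>) \<le> 4 c 2^k\<close>.\<close>
lemma nn_integral_superlevel_powr_le:
  fixes v :: "'a \<Rightarrow> real"
  assumes v[measurable]: "v \<in> borel_measurable M" and A[measurable]: "A \<in> sets M"
    and c: "0 < c" "c \<le> \<epsilon>" and q: "0 < q"
  shows "(\<integral>\<^sup>+x\<in>{x\<in>A. 2 * \<epsilon> < v x}. ennreal (v x powr q) \<partial>M)
         \<le> ennreal (4 powr q) * (\<Sum>k. ennreal ((c * 2 ^ k) powr q) * emeasure M {x\<in>A. \<epsilon> + c * 2 ^ k < v x})"
proof -
  have pointwise: "ennreal (v x powr q) * indicator {x\<in>A. 2 * \<epsilon> < v x} x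
      \<le> ennreal (4 powr q) * (\<Sum>k. ennreal ((c * 2 ^ k) powr q) * indicator {x\<in>A. \<epsilon> + c * 2 ^ k < v x} x)"
    for x
  proof (cases "x \<in> A \<and> 2 * \<epsilon> < v x")
    case True
    then have x: "x \<in> A" "2 * \<epsilon> < v x" by auto
    obtain k where "(v x - \<epsilon>) / c < 2 ^ k" using real_arch_pow[of 2] by auto
    then have "\<exists>k. v x - \<epsilon> \<le> c * 2 ^ k" using c by (auto simp: field_simps intro!: exI[of _ k])
    then obtain k' where k'_above: "v x - \<epsilon> \<le> c * 2 ^ k'" and k'_least: "\<forall>j<k'. \<not> v x - \<epsilon> \<le> c * 2 ^ j"
      using exists_least_iff[of "\<lambda>k. v x - \<epsilon> \<le> c * 2 ^ k"] by blast
    have "k' \<noteq> 0" using k'_above x c by (intro notI) simp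
    then obtain k where k: "k' = Suc k" using not0_implies_Suc by blast
    have xk: "x \<in> {x\<in>A. \<epsilon> + c * 2 ^ k < v x}" using k'_least k x by auto
    have "v x \<le> 4 * (c * 2 ^ k)" using k'_above k x c by simp
    then have "v x powr q \<le> 4 powr q * (c * 2 ^ k) powr q"
      using x c by (simp add: powr_mult[symmetric] powr_mono2 less_imp_le q)
    then have "ennreal (v x powr q) \<le> ennreal (4 powr q) * ennreal ((c * 2 ^ k) powr q)"
      by (simp add: ennreal_mult[symmetric] ennreal_leI)
    also have "ennreal ((c * 2 ^ k) powr q)
        = (\<Sum>j\<in>{k}. ennreal ((c * 2 ^ j) powr q) * indicator {x\<in>A. \<epsilon> + c * 2 ^ j < v x} x)"
      using xk by simp
    also have "\<dots> \<le> (\<Sum>j. ennreal ((c * 2 ^ j) powr q) * indicator {x\<in>A. \<epsilon> + c * 2 ^ j < v x} x)"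
      by (intro sum_le_suminf summableI) auto
    finally show ?thesis using x by (simp add: mult_left_mono)
  qed simp
  have "(\<integral>\<^sup>+x\<in>{x\<in>A. 2 * \<epsilon> < v x}. ennreal (v x powr q) \<partial>M)
      \<le> (\<integral>\<^sup>+x. ennreal (4 powr q) * (\<Sum>k. ennreal ((c * 2 ^ k) powr q) * indicator {x\<in>A. \<epsilon> + c * 2 ^ k < v x} x) \<partial>M)"
    by (intro nn_integral_mono pointwise)
  also have "\<dots> = ennreal (4 powr q) * (\<Sum>k. \<integral>\<^sup>+x. ennreal ((c * 2 ^ k) powr q) * indicator {x\<in>A. \<epsilon> + c * 2 ^ k < v x} x \<partial>M)"
    by (simp add: nn_integral_cmult nn_integral_suminf)
  also have "\<dots> = ennreal (4 powr q) * (\<Sum>k. ennreal ((c * 2 ^ k) powr q) * emeasure M {x\<in>A. \<epsilon> + c * 2 ^ k < v x})"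
    by (simp add: nn_integral_cmult_indicator)
  finally show ?thesis .
qed

lemma nn_integral_superlevel_limit_le:
  fixes v :: "'a \<Rightarrow> real"
  assumes f[measurable]: "f \<in> borel_measurable M" and v[measurable]: "v \<in> borel_measurable M"
    and A[measurable]: "A \<in> sets M"
    and bound: "\<And>\<epsilon>. 0 < \<epsilon> \<Longrightarrow> (\<integral>\<^sup>+x\<in>{x\<in>A. \<epsilon> < v x}. f x \<partial>M) \<le> B"
  shows "(\<integral>\<^sup>+x\<in>{x\<in>A. 0 < v x}. f x \<partial>M) \<le> B"
proof -
  define S where "S j = {x\<in>A. 1 / Suc j < v x}" for j :: nat
  have S[measurable]: "S j \<in> sets M" for j unfolding S_def by measurable
  have "incseq S"
  proof (rule incseq_SucI)
    fix j
    have "1 / real (Suc (Suc j)) \<le> 1 / real (Suc j)" by (simp add: frac_le)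
    then show "S j \<subseteq> S (Suc j)" unfolding S_def by auto
  qed
  have "(\<Union>j. S j) = {x\<in>A. 0 < v x}"
  proof (intro equalityI subsetI)
    fix x assume "x \<in> {x\<in>A. 0 < v x}"
    then obtain j where "inverse (real (Suc j)) < v x" "x \<in> A" using reals_Archimedean by blast
    then show "x \<in> (\<Union>j. S j)" unfolding S_def by (auto simp: inverse_eq_divide)
  next
    fix x assume "x \<in> (\<Union>j. S j)"
    then obtain j where x: "x \<in> A" and j: "1 / real (Suc j) < v x" by (auto simp: S_def)
    have "0 < 1 / real (Suc j)" by simp
    then have "0 < v x" using j by (rule less_trans)
    with x show "x \<in> {x\<in>A. 0 < v x}" by simp
  qed
  then have "(\<integral>\<^sup>+x\<in>{x\<in>A. 0 < v x}. f x \<partial>M) = emeasure (density M f) (\<Union>j. S j)"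
    by (simp add: emeasure_density)
  also have "\<dots> = (SUP j. emeasure (density M f) (S j))"
    using \<open>incseq S\<close> by (intro SUP_emeasure_incseq[symmetric]) auto
  also have "\<dots> = (SUP j. \<integral>\<^sup>+x\<in>S j. f x \<partial>M)" by (simp add: emeasure_density)
  also have "\<dots> \<le> B" using bound by (intro SUP_least) (simp add: S_def)
  finally show ?thesis .
qed

lemma borel_measurable_dist_lebesgue_pair[measurable]:
  "(\<lambda>p. dist (fst p) (snd p)) \<in> borel_measurable (lebesgue \<Otimes>\<^sub>M (lebesgue :: 'a::euclidean_space measure))"
  by (intro borel_measurable_dist measurable_compose[OF measurable_fst]
      measurable_compose[OF measurable_snd]) (simp_all add: measurable_completion measurable_ident_sets)

lemma borel_measurable_young_dist_kernel:
  fixes F :: "'a::euclidean_space \<times> 'a \<Rightarrow> real"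
  assumes "young_function \<phi>" "F \<in> borel_measurable (lebesgue \<Otimes>\<^sub>M lebesgue)" "\<And>p. 0 \<le> F p"
  shows "(\<lambda>p. \<phi> (F p * dist (fst p) (snd p) powr \<beta>)) \<in> borel_measurable (lebesgue \<Otimes>\<^sub>M lebesgue)"
proof (rule borel_measurable_young_function_comp[OF assms(1)])
  note [measurable] = assms(2) borel_measurable_dist_lebesgue_pair
  show "(\<lambda>p. F p * dist (fst p) (snd p) powr \<beta>) \<in> borel_measurable (lebesgue \<Otimes>\<^sub>M lebesgue)"
    by measurable
qed (simp add: assms(3))

text \<open>The part of the Besov energy of \<open>v\<close> coming from pairs that jump from \<open>v \<le> a\<close> to
  \<open>v > b\<close>, each pair weighted as if the jump were only \<open>b - a\<close>.\<close>
definition level_jump_energy ::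
  "real \<Rightarrow> (real \<Rightarrow> real) \<Rightarrow> 'a::euclidean_space set \<Rightarrow> ('a \<Rightarrow> real) \<Rightarrow> real \<Rightarrow> real \<Rightarrow> ennreal" where
  "level_jump_energy \<beta> \<phi> \<Omega> v a b =
     (\<integral>\<^sup>+x\<in>\<Omega>. (\<integral>\<^sup>+y\<in>\<Omega>. ennreal (if b < v x \<and> v y \<le> a
        then \<phi> ((b - a) * dist x y powr \<beta>) / dist x y ^ (2 * DIM('a)) else 0) \<partial>lebesgue) \<partial>lebesgue)"

lemma sum_level_jump_energy_le:
  fixes \<Omega> :: "'a::euclidean_space set" and v :: "'a \<Rightarrow> real"
  assumes yf: "young_function \<phi>" and c: "0 < c"
    and \<Omega>[measurable]: "\<Omega> \<in> sets lebesgue" and v[measurable]: "v \<in> borel_measurable lebesgue"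
  shows "(\<Sum>k. level_jump_energy (- \<alpha>) \<phi> \<Omega> v (\<epsilon> + c * 2 ^ k) (\<epsilon> + c * 2 ^ Suc k))
         \<le> 2 * besov_modular \<alpha> \<phi> \<Omega> v 1"
proof -
  interpret L: sigma_finite_measure "lebesgue :: 'a measure" by (rule sigma_finite_lebesgue)
  define h where "h k p = ennreal (if \<epsilon> + c * 2 ^ Suc k < v (fst p) \<and> v (snd p) \<le> \<epsilon> + c * 2 ^ k
      then \<phi> (c * 2 ^ k * dist (fst p) (snd p) powr (- \<alpha>)) / dist (fst p) (snd p) ^ (2 * DIM('a))
      else 0)" for k p
  define g where "g p = ennreal (\<phi> (\<bar>v (fst p) - v (snd p)\<bar> * dist (fst p) (snd p) powr (- \<alpha>))
      / dist (fst p) (snd p) ^ (2 * DIM('a)))" for p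
  have [measurable]: "(\<lambda>p. v (fst p)) \<in> borel_measurable (lebesgue \<Otimes>\<^sub>M (lebesgue :: 'a measure))"
    "(\<lambda>p. v (snd p)) \<in> borel_measurable (lebesgue \<Otimes>\<^sub>M (lebesgue :: 'a measure))"
    by (auto intro: measurable_compose[OF measurable_fst] measurable_compose[OF measurable_snd])
  have [measurable]: "(\<lambda>p. \<phi> (c * 2 ^ k * dist (fst p) (snd p :: 'a) powr (- \<alpha>)))
      \<in> borel_measurable (lebesgue \<Otimes>\<^sub>M lebesgue)" for k
    using c by (intro borel_measurable_young_dist_kernel[OF yf]) auto
  have [measurable]: "(\<lambda>p. \<phi> (\<bar>v (fst p) - v (snd p)\<bar> * dist (fst p) (snd p) powr (- \<alpha>)))
      \<in> borel_measurable (lebesgue \<Otimes>\<^sub>M lebesgue)"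
    by (intro borel_measurable_young_dist_kernel[OF yf]) simp_all
  have h[measurable]: "h k \<in> borel_measurable (lebesgue \<Otimes>\<^sub>M lebesgue)" for k
    unfolding h_def by measurable
  have g[measurable]: "g \<in> borel_measurable (lebesgue \<Otimes>\<^sub>M lebesgue)"
    unfolding g_def by measurable
  have gy: "(\<lambda>y. g (x, y) * indicator \<Omega> y) \<in> borel_measurable lebesgue" for x
    by measurable
  have "(\<lambda>(x, y). g (x, y) * indicator \<Omega> y) \<in> borel_measurable (lebesgue \<Otimes>\<^sub>M lebesgue)"
    by measurable
  then have gx: "(\<lambda>x. (\<integral>\<^sup>+y\<in>\<Omega>. g (x, y) \<partial>lebesgue) * indicator \<Omega> x) \<in> borel_measurable lebesgue"
    using L.borel_measurable_nn_integral by measurable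
  have energy: "level_jump_energy (- \<alpha>) \<phi> \<Omega> v (\<epsilon> + c * 2 ^ k) (\<epsilon> + c * 2 ^ Suc k)
      = (\<integral>\<^sup>+x\<in>\<Omega>. (\<integral>\<^sup>+y\<in>\<Omega>. h k (x, y) \<partial>lebesgue) \<partial>lebesgue)" for k
  proof -
    have gap: "(\<epsilon> + c * 2 ^ Suc k) - (\<epsilon> + c * 2 ^ k) = c * 2 ^ k" by simp
    show ?thesis unfolding level_jump_energy_def h_def gap by (simp cong: if_cong)
  qed
  have modular: "besov_modular \<alpha> \<phi> \<Omega> v 1 = (\<integral>\<^sup>+x\<in>\<Omega>. (\<integral>\<^sup>+y\<in>\<Omega>. g (x, y) \<partial>lebesgue) \<partial>lebesgue)"
    unfolding besov_modular_def g_def by (simp add: powr_minus divide_inverse)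
  have crossings: "(\<Sum>k. h k p) \<le> 2 * g p" for p
    unfolding h_def g_def by (rule suminf_dyadic_crossings_le[OF yf c]) simp
  have "(\<Sum>k. level_jump_energy (- \<alpha>) \<phi> \<Omega> v (\<epsilon> + c * 2 ^ k) (\<epsilon> + c * 2 ^ Suc k))
      = (\<integral>\<^sup>+x\<in>\<Omega>. (\<integral>\<^sup>+y\<in>\<Omega>. (\<Sum>k. h k (x, y)) \<partial>lebesgue) \<partial>lebesgue)"
    unfolding energy by (rule suminf_iterated_set_nn_integral[OF sigma_finite_lebesgue \<Omega> h])
  also have "\<dots> \<le> (\<integral>\<^sup>+x\<in>\<Omega>. (\<integral>\<^sup>+y\<in>\<Omega>. 2 * g (x, y) \<partial>lebesgue) \<partial>lebesgue)"
    by (intro nn_integral_mono mult_right_mono crossings) auto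
  also have "\<dots> = (\<integral>\<^sup>+x\<in>\<Omega>. 2 * (\<integral>\<^sup>+y\<in>\<Omega>. g (x, y) \<partial>lebesgue) \<partial>lebesgue)"
    using nn_integral_cmult[OF gy, where c = 2] by (simp add: mult.assoc)
  also have "\<dots> = 2 * (\<integral>\<^sup>+x\<in>\<Omega>. (\<integral>\<^sup>+y\<in>\<Omega>. g (x, y) \<partial>lebesgue) \<partial>lebesgue)"
    using nn_integral_cmult[OF gx, where c = 2] by (simp add: mult.assoc)
  finally show ?thesis unfolding modular .
qed

text \<open>The geometric input of the energy estimates; global regularity of \<open>\<Omega>\<close> together with the
  side conditions on \<open>v\<close> provides it.\<close>
definition sublevel_fills_balls :: "real \<Rightarrow> 'a::euclidean_space set \<Rightarrow> ('a \<Rightarrow> real) \<Rightarrow> bool" where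
  "sublevel_fills_balls \<theta> \<Omega> v \<longleftrightarrow>
     (\<forall>x\<in>\<Omega>. \<forall>a>0. \<forall>r>0. \<theta> * r ^ DIM('a) = 2 * measure lebesgue {y\<in>\<Omega>. a < v y} \<longrightarrow>
        ennreal (measure lebesgue {y\<in>\<Omega>. a < v y}) \<le> emeasure lebesgue (ball x r \<inter> {y\<in>\<Omega>. v y \<le> a}))"

text \<open>Every \<open>y\<close> below level \<open>a\<close> in the ball of radius \<open>R\<close> around \<open>x\<close> is a jump partner of \<open>x\<close>,
  and by the upper type the kernel at distance \<open>< R\<close> dominates its value at \<open>R\<close>.\<close>
lemma level_jump_inner_integral_ge:
  fixes \<Omega> :: "'a::euclidean_space set" and v :: "'a \<Rightarrow> real"
  assumes yf: "young_function \<phi>" and upper: "upper_type DIM('a) \<beta> K \<phi>"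
    and fills: "sublevel_fills_balls \<theta> \<Omega> v"
    and \<Omega>[measurable]: "\<Omega> \<in> sets lebesgue" and v[measurable]: "v \<in> borel_measurable lebesgue"
    and a: "0 < a" and ab: "a < b" and R: "0 < R"
    and radius: "\<theta> * R ^ DIM('a) = 2 * measure lebesgue {y\<in>\<Omega>. a < v y}"
    and x: "x \<in> \<Omega>" "b < v x"
  shows "ennreal (measure lebesgue {y\<in>\<Omega>. a < v y} * (\<phi> ((b - a) * R powr \<beta>) / (K * R ^ (2 * DIM('a)))))
         \<le> (\<integral>\<^sup>+y\<in>\<Omega>. ennreal (if b < v x \<and> v y \<le> a
              then \<phi> ((b - a) * dist x y powr \<beta>) / dist x y ^ (2 * DIM('a)) else 0) \<partial>lebesgue)"
proof -
  define B where "B = \<phi> ((b - a) * R powr \<beta>) / (K * R ^ (2 * DIM('a)))"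
  define S where "S = ball x R \<inter> {y\<in>\<Omega>. v y \<le> a}"
  have B: "0 \<le> B"
    unfolding B_def using upper_type_ge_one[OF yf upper] ab R
    by (intro divide_nonneg_nonneg young_function_nonneg[OF yf]) auto
  have [measurable]: "S \<in> sets lebesgue"
    unfolding S_def by (intro sets.Int fmeasurableD[OF lmeasurable_ball]) measurable
  have pointwise: "ennreal B * indicator S y \<le> ennreal (if b < v x \<and> v y \<le> a
      then \<phi> ((b - a) * dist x y powr \<beta>) / dist x y ^ (2 * DIM('a)) else 0) * indicator \<Omega> y" for y
  proof (cases "y \<in> S")
    case True
    then have y: "y \<in> \<Omega>" "v y \<le> a" "dist x y < R" by (auto simp: S_def)
    then have "0 < dist x y" using x ab by auto
    then have "B \<le> \<phi> ((b - a) * dist x y powr \<beta>) / dist x y ^ (2 * DIM('a))"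
      unfolding B_def using upper_type_kernel_le[OF yf upper _ y(3)] ab by simp
    then show ?thesis using True x y by (simp add: ennreal_leI)
  qed simp
  have "ennreal (measure lebesgue {y\<in>\<Omega>. a < v y} * B)
      = ennreal B * ennreal (measure lebesgue {y\<in>\<Omega>. a < v y})"
    using B by (simp add: ennreal_mult mult.commute)
  also have "\<dots> \<le> ennreal B * emeasure lebesgue S"
    using fills x a R radius unfolding sublevel_fills_balls_def S_def
    by (intro mult_left_mono) auto
  also have "\<dots> = (\<integral>\<^sup>+y. ennreal B * indicator S y \<partial>lebesgue)"
    by (simp add: nn_integral_cmult_indicator)
  also have "\<dots> \<le> (\<integral>\<^sup>+y\<in>\<Omega>. ennreal (if b < v x \<and> v y \<le> a
      then \<phi> ((b - a) * dist x y powr \<beta>) / dist x y ^ (2 * DIM('a)) else 0) \<partial>lebesgue)"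
    by (intro nn_integral_mono pointwise)
  finally show ?thesis unfolding B_def .
qed

lemma level_jump_energy_ge:
  fixes \<Omega> :: "'a::euclidean_space set" and v :: "'a \<Rightarrow> real"
  assumes yf: "young_function \<phi>" and upper: "upper_type DIM('a) \<beta> K \<phi>"
    and fills: "sublevel_fills_balls \<theta> \<Omega> v"
    and \<Omega>[measurable]: "\<Omega> \<in> sets lebesgue" and v[measurable]: "v \<in> borel_measurable lebesgue"
    and a: "0 < a" and ab: "a < b" and R: "0 < R"
    and radius: "\<theta> * R ^ DIM('a) = 2 * measure lebesgue {x\<in>\<Omega>. a < v x}"
  shows "ennreal (measure lebesgue {x\<in>\<Omega>. b < v x} * measure lebesgue {x\<in>\<Omega>. a < v x}
           * (\<phi> ((b - a) * R powr \<beta>) / (K * R ^ (2 * DIM('a)))))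
         \<le> level_jump_energy \<beta> \<phi> \<Omega> v a b"
proof -
  define I where "I = measure lebesgue {x\<in>\<Omega>. a < v x} * (\<phi> ((b - a) * R powr \<beta>) / (K * R ^ (2 * DIM('a))))"
  have I: "0 \<le> I"
    unfolding I_def using upper_type_ge_one[OF yf upper] ab R
    by (intro mult_nonneg_nonneg divide_nonneg_nonneg young_function_nonneg[OF yf]) auto
  have inner: "ennreal I * indicator {x\<in>\<Omega>. b < v x} x \<le> (\<integral>\<^sup>+y\<in>\<Omega>. ennreal (if b < v x \<and> v y \<le> a
      then \<phi> ((b - a) * dist x y powr \<beta>) / dist x y ^ (2 * DIM('a)) else 0) \<partial>lebesgue) * indicator \<Omega> x" for x
    using level_jump_inner_integral_ge[OF yf upper fills \<Omega> v a ab R radius, of x]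
    unfolding I_def by (cases "x \<in> \<Omega> \<and> b < v x") auto
  have "ennreal (measure lebesgue {x\<in>\<Omega>. b < v x} * measure lebesgue {x\<in>\<Omega>. a < v x}
           * (\<phi> ((b - a) * R powr \<beta>) / (K * R ^ (2 * DIM('a)))))
      = ennreal I * ennreal (measure lebesgue {x\<in>\<Omega>. b < v x})"
    using I by (simp add: I_def mult_ac flip: ennreal_mult)
  also have "\<dots> \<le> ennreal I * emeasure lebesgue {x\<in>\<Omega>. b < v x}"
    by (intro mult_left_mono ennreal_measure_le_emeasure) auto
  also have "\<dots> = (\<integral>\<^sup>+x. ennreal I * indicator {x\<in>\<Omega>. b < v x} x \<partial>lebesgue)"
    by (simp add: nn_integral_cmult_indicator)
  also have "\<dots> \<le> level_jump_energy \<beta> \<phi> \<Omega> v a b"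
    unfolding level_jump_energy_def by (intro nn_integral_mono inner)
  finally show ?thesis .
qed

lemma dyadic_level_energy_le:
  fixes \<Omega> :: "'a::euclidean_space set" and v :: "'a \<Rightarrow> real"
  assumes yf: "young_function \<phi>" and \<alpha>: "\<alpha> < 0" and upper: "upper_type DIM('a) (- \<alpha>) K \<phi>"
    and \<theta>: "0 < \<theta>" and fills: "sublevel_fills_balls \<theta> \<Omega> v"
    and \<Omega>[measurable]: "\<Omega> \<in> sets lebesgue" and v[measurable]: "v \<in> borel_measurable lebesgue"
    and fin: "\<forall>a>0. emeasure lebesgue {x\<in>\<Omega>. a < v x} < \<infinity>"
    and \<epsilon>: "0 \<le> \<epsilon>" and c: "0 < c" and q: "q = DIM('a) / - \<alpha>"
    and m: "\<And>k. m k = measure lebesgue {x\<in>\<Omega>. \<epsilon> + c * 2 ^ k < v x}"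
  shows "ennreal (m (Suc k) * \<phi> (c * 2 ^ k * ((2 / \<theta>) * m k) powr (1 / q)) / m k)
         \<le> ennreal (K * (2 / \<theta>)\<^sup>2)
           * level_jump_energy (- \<alpha>) \<phi> \<Omega> v (\<epsilon> + c * 2 ^ k) (\<epsilon> + c * 2 ^ Suc k)"
proof (cases "m (Suc k) = 0")
  case True
  then show ?thesis by simp
next
  case False
  have K: "0 < K" using upper_type_ge_one[OF yf upper] by simp
  have "m (Suc k) \<le> m k"
    unfolding m using \<epsilon> c
    by (intro measure_superlevel_antimono[OF fin _ _ \<Omega> v]) (auto simp: add_nonneg_pos)
  moreover have "0 \<le> m (Suc k)" by (simp add: m)
  ultimately have mk: "0 < m k" using False by linarith
  define R where "R = ((2 / \<theta>) * m k) powr (1 / DIM('a))"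
  have R: "0 < R" unfolding R_def using mk \<theta> by simp
  have Rn: "R ^ DIM('a) = (2 / \<theta>) * m k"
    unfolding R_def using mk \<theta> by (simp add: powr_realpow'[symmetric] powr_powr)
  then have R2n: "R ^ (2 * DIM('a)) = ((2 / \<theta>) * m k)\<^sup>2"
    by (metis power_mult mult.commute)
  have R\<beta>: "((2 / \<theta>) * m k) powr (1 / q) = R powr (- \<alpha>)"
    unfolding R_def q using \<alpha> by (simp add: powr_powr)
  define X where "X = \<phi> (c * 2 ^ k * R powr (- \<alpha>))"
  define Y where "Y = m (Suc k) * m k * (X / (K * R ^ (2 * DIM('a))))"
  have gap: "(\<epsilon> + c * 2 ^ Suc k) - (\<epsilon> + c * 2 ^ k) = c * 2 ^ k" by simp
  have "ennreal Y \<le> level_jump_energy (- \<alpha>) \<phi> \<Omega> v (\<epsilon> + c * 2 ^ k) (\<epsilon> + c * 2 ^ Suc k)"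
    using level_jump_energy_ge[OF yf upper fills \<Omega> v _ _ R, of "\<epsilon> + c * 2 ^ k" "\<epsilon> + c * 2 ^ Suc k"]
      \<epsilon> c \<theta> Rn
    unfolding gap X_def Y_def m by (simp add: add_nonneg_pos)
  moreover have "m (Suc k) * \<phi> (c * 2 ^ k * ((2 / \<theta>) * m k) powr (1 / q)) / m k = K * (2 / \<theta>)\<^sup>2 * Y"
    unfolding Y_def R\<beta> X_def[symmetric] R2n using mk \<theta> K
    by (simp add: field_simps power2_eq_square)
  ultimately show ?thesis
    using K by (simp add: ennreal_mult' mult_left_mono)
qed

lemma dyadic_level_energy_sum_le:
  fixes \<Omega> :: "'a::euclidean_space set" and v :: "'a \<Rightarrow> real"
  assumes yf: "young_function \<phi>" and \<alpha>: "\<alpha> < 0" and upper: "upper_type DIM('a) (- \<alpha>) K \<phi>"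
    and \<theta>: "0 < \<theta>" and fills: "sublevel_fills_balls \<theta> \<Omega> v"
    and \<Omega>[measurable]: "\<Omega> \<in> sets lebesgue" and v[measurable]: "v \<in> borel_measurable lebesgue"
    and fin: "\<forall>a>0. emeasure lebesgue {x\<in>\<Omega>. a < v x} < \<infinity>"
    and modular: "besov_modular \<alpha> \<phi> \<Omega> v 1 \<le> 1"
    and \<epsilon>: "0 \<le> \<epsilon>" and c: "0 < c" and q: "q = DIM('a) / - \<alpha>"
    and m: "\<And>k. m k = measure lebesgue {x\<in>\<Omega>. \<epsilon> + c * 2 ^ k < v x}"
  shows "(\<Sum>k<N. m (Suc k) * \<phi> (c * 2 ^ k * ((2 / \<theta>) * m k) powr (1 / q)) / m k)
         \<le> 2 * K * (2 / \<theta>)\<^sup>2"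
proof -
  define I where "I k = level_jump_energy (- \<alpha>) \<phi> \<Omega> v (\<epsilon> + c * 2 ^ k) (\<epsilon> + c * 2 ^ Suc k)" for k
  define e where "e k = m (Suc k) * \<phi> (c * 2 ^ k * ((2 / \<theta>) * m k) powr (1 / q)) / m k" for k
  have K: "0 < K" using upper_type_ge_one[OF yf upper] by simp
  have e_nonneg: "0 \<le> e k" for k
    unfolding e_def m using c by (intro divide_nonneg_nonneg mult_nonneg_nonneg
        young_function_nonneg[OF yf]) auto
  have "ennreal (\<Sum>k<N. e k) = (\<Sum>k<N. ennreal (e k))"
    by (rule sum_ennreal[symmetric]) (rule e_nonneg)
  also have "\<dots> \<le> (\<Sum>k<N. ennreal (K * (2 / \<theta>)\<^sup>2) * I k)"
    unfolding e_def I_def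
    by (intro sum_mono dyadic_level_energy_le[OF yf \<alpha> upper \<theta> fills \<Omega> v fin \<epsilon> c q m])
  also have "\<dots> \<le> ennreal (K * (2 / \<theta>)\<^sup>2) * (\<Sum>k. I k)"
    by (simp add: sum_distrib_left[symmetric] mult_left_mono sum_le_suminf)
  also have "\<dots> \<le> ennreal (K * (2 / \<theta>)\<^sup>2) * 2"
  proof (rule mult_left_mono)
    have "(\<Sum>k. I k) \<le> 2 * besov_modular \<alpha> \<phi> \<Omega> v 1"
      unfolding I_def by (rule sum_level_jump_energy_le[OF yf c \<Omega> v])
    also have "\<dots> \<le> 2" using mult_left_mono[OF modular, of 2] by simp
    finally show "(\<Sum>k. I k) \<le> 2" .
  qed simp
  also have "\<dots> = ennreal (2 * K * (2 / \<theta>)\<^sup>2)"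
    using K by (simp add: ennreal_mult'' mult_ac)
  finally have "(\<Sum>k<N. e k) \<le> 2 * K * (2 / \<theta>)\<^sup>2"
    using K by (subst (asm) ennreal_le_iff) auto
  then show ?thesis by (simp only: e_def)
qed

lemma small_first_level:
  fixes \<Omega> :: "'a::euclidean_space set" and v :: "'a \<Rightarrow> real"
  assumes fin: "\<forall>a>0. emeasure lebesgue {x\<in>\<Omega>. a < v x} < \<infinity>"
    and \<Omega>[measurable]: "\<Omega> \<in> sets lebesgue" and v[measurable]: "v \<in> borel_measurable lebesgue"
    and \<epsilon>: "0 < \<epsilon>" and A: "0 < A" and q: "0 < q"
  obtains c where "0 < c" "c \<le> \<epsilon>" "c powr q * measure lebesgue {x\<in>\<Omega>. \<epsilon> + c < v x} \<le> A"
proof -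
  define M where "M = measure lebesgue {x\<in>\<Omega>. \<epsilon> < v x}"
  define c where "c = min \<epsilon> ((A / (M + 1)) powr (1 / q))"
  have M: "0 \<le> M" by (simp add: M_def)
  have c: "0 < c" "c \<le> \<epsilon>" unfolding c_def using \<epsilon> A M by auto
  have "measure lebesgue {x\<in>\<Omega>. \<epsilon> + c < v x} \<le> M"
    unfolding M_def using c \<epsilon> by (intro measure_superlevel_antimono[OF fin _ _ \<Omega> v]) auto
  moreover have "c powr q \<le> ((A / (M + 1)) powr (1 / q)) powr q"
    using c q by (intro powr_mono2) (auto simp: c_def)
  then have "c powr q \<le> A / (M + 1)" using q A M by (simp add: powr_powr)
  ultimately have "c powr q * measure lebesgue {x\<in>\<Omega>. \<epsilon> + c < v x} \<le> A / (M + 1) * M"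
    using A M by (intro mult_mono) auto
  also have "\<dots> \<le> A" using A M by (simp add: field_simps)
  finally show ?thesis using that c by blast
qed

lemma superlevel_powr_integral_le:
  fixes \<Omega> :: "'a::euclidean_space set" and v :: "'a \<Rightarrow> real"
  assumes yf: "young_function \<phi>" and \<alpha>: "\<alpha> < 0" and upper: "upper_type DIM('a) (- \<alpha>) K \<phi>"
    and \<theta>: "0 < \<theta>" and fills: "sublevel_fills_balls \<theta> \<Omega> v"
    and \<Omega>[measurable]: "\<Omega> \<in> sets lebesgue" and v[measurable]: "v \<in> borel_measurable lebesgue"
    and fin: "\<forall>a>0. emeasure lebesgue {x\<in>\<Omega>. a < v x} < \<infinity>"
    and modular: "besov_modular \<alpha> \<phi> \<Omega> v 1 \<le> 1"
    and q: "q = DIM('a) / - \<alpha>" and C': "C' = 2 * K * (2 / \<theta>)\<^sup>2"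
    and A\<^sub>0: "0 < A\<^sub>0" and large: "2 powr q * C' \<le> \<phi> (((2 / \<theta>) * (A\<^sub>0 / 2 powr q)) powr (1 / q))"
    and \<epsilon>: "0 < \<epsilon>"
  shows "(\<integral>\<^sup>+x\<in>{x\<in>\<Omega>. 2 * \<epsilon> < v x}. ennreal (v x powr q) \<partial>lebesgue)
         \<le> ennreal (4 powr q * (A\<^sub>0 + 2 powr q * K * A\<^sub>0 * C' / \<phi> (((2 / \<theta>) * A\<^sub>0) powr (1 / q))))"
proof -
  define S where "S = A\<^sub>0 + 2 powr q * K * A\<^sub>0 * C' / \<phi> (((2 / \<theta>) * A\<^sub>0) powr (1 / q))"
  have q0: "0 < q" using q \<alpha> by (simp add: divide_pos_neg)
  obtain c where c: "0 < c" "c \<le> \<epsilon>"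
    and first: "c powr q * measure lebesgue {x\<in>\<Omega>. \<epsilon> + c < v x} \<le> A\<^sub>0"
    using small_first_level[OF fin \<Omega> v \<epsilon> A\<^sub>0 q0] by blast
  define m where "m k = measure lebesgue {x\<in>\<Omega>. \<epsilon> + c * 2 ^ k < v x}" for k
  have base: "c powr q * m 0 \<le> A\<^sub>0" using first by (simp add: m_def)
  have level_pos: "0 < \<epsilon> + c * 2 ^ k" for k using c by (simp add: add_pos_pos)
  have m_mono: "m (Suc k) \<le> m k" for k
    unfolding m_def using c level_pos by (intro measure_superlevel_antimono[OF fin _ _ \<Omega> v]) auto
  have energy: "(\<Sum>k<N. m (Suc k) * \<phi> (c * 2 ^ k * ((2 / \<theta>) * m k) powr (1 / q)) / m k) \<le> C'" for N
    unfolding C' using dyadic_level_energy_sum_le[OF yf \<alpha> upper \<theta> fills \<Omega> v fin modular _ c(1) q]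
      \<epsilon> m_def by simp
  have masses: "(\<Sum>k<N. (c * 2 ^ k) powr q * m k) \<le> S" for N
    unfolding S_def
  proof (rule dyadic_level_masses_sum_le[OF yf _ _ _ upper \<theta> c(1) _ m_mono energy _ A\<^sub>0 large base])
    show "0 < C'" unfolding C' using upper_type_ge_one[OF yf upper] \<theta> by simp
  qed (use \<alpha> q in \<open>auto simp: m_def\<close>)
  have "(\<Sum>k. ennreal ((c * 2 ^ k) powr q) * emeasure lebesgue {x\<in>\<Omega>. \<epsilon> + c * 2 ^ k < v x})
      \<le> ennreal S"
  proof (rule suminf_ennreal_mult_emeasure_le)
    show "emeasure lebesgue {x\<in>\<Omega>. \<epsilon> + c * 2 ^ k < v x} \<noteq> \<infinity>" for k
      using fin[rule_format, OF level_pos[of k]] by simp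
  qed (use masses in \<open>simp_all add: m_def\<close>)
  then have "(\<integral>\<^sup>+x\<in>{x\<in>\<Omega>. 2 * \<epsilon> < v x}. ennreal (v x powr q) \<partial>lebesgue) \<le> ennreal (4 powr q) * ennreal S"
    using nn_integral_superlevel_powr_le[OF v \<Omega> c q0] by (meson mult_left_mono order_trans zero_le)
  then show ?thesis by (simp add: S_def ennreal_mult')
qed

section \<open>Regular domains and the embedding\<close>

text \<open>The side conditions on \<open>u\<close> in the theorem, in a form invariant under \<open>u \<mapsto> u / \<lambda>\<close>
  (when \<open>|\<Omega>| < \<infinity>\<close> the finiteness of the superlevel sets is automatic).\<close>
definition admissible_on :: "'a::euclidean_space set \<Rightarrow> ('a \<Rightarrow> real) \<Rightarrow> bool" where
  "admissible_on \<Omega> u \<longleftrightarrow> (\<forall>x\<in>\<Omega>. 0 \<le> u x) \<and> (\<forall>a>0. emeasure lebesgue {x\<in>\<Omega>. a < u x} < \<infinity>) \<and>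
     (emeasure lebesgue \<Omega> < \<infinity> \<longrightarrow> emeasure lebesgue \<Omega> / 2 \<le> emeasure lebesgue {x\<in>\<Omega>. u x = 0})"

lemma admissible_onI:
  assumes \<Omega>: "\<Omega> \<in> sets lebesgue"
    and "emeasure lebesgue \<Omega> < \<infinity> \<Longrightarrow>
      (\<forall>x\<in>\<Omega>. 0 \<le> u x) \<and> emeasure lebesgue \<Omega> / 2 \<le> emeasure lebesgue {x\<in>\<Omega>. u x = 0}"
    and "emeasure lebesgue \<Omega> = \<infinity> \<Longrightarrow>
      (\<forall>x\<in>\<Omega>. 0 \<le> u x) \<and> (\<forall>a>0. emeasure lebesgue {x\<in>\<Omega>. a < u x} < \<infinity>)"
  shows "admissible_on \<Omega> u"
proof (cases "emeasure lebesgue \<Omega> = \<infinity>")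
  case False
  then have "emeasure lebesgue \<Omega> < \<infinity>" by (simp add: less_top)
  moreover have "emeasure lebesgue {x\<in>\<Omega>. a < u x} \<le> emeasure lebesgue \<Omega>" for a
    by (rule emeasure_mono) (auto simp: \<Omega>)
  ultimately show ?thesis using assms(2) unfolding admissible_on_def by (meson le_less_trans)
qed (use assms(3) in \<open>simp add: admissible_on_def\<close>)

lemma admissible_on_scale:
  assumes "admissible_on \<Omega> u" "0 < t" "\<And>x. x \<in> \<Omega> \<Longrightarrow> v x = u x / t"
  shows "admissible_on \<Omega> v"
proof -
  have "{x\<in>\<Omega>. a < v x} = {x\<in>\<Omega>. a * t < u x}" for a
    using assms(2,3) by (auto simp: pos_less_divide_eq)
  moreover have "{x\<in>\<Omega>. v x = 0} = {x\<in>\<Omega>. u x = 0}" using assms(2,3) by auto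
  ultimately show ?thesis
    using assms unfolding admissible_on_def by (simp add: divide_nonneg_pos)
qed

lemma measure_superlevel_le_zero_set:
  fixes \<Omega> :: "'a::euclidean_space set" and v :: "'a \<Rightarrow> real"
  assumes adm: "admissible_on \<Omega> v" and fin: "emeasure lebesgue \<Omega> < \<infinity>" and a: "0 < a"
    and \<Omega>[measurable]: "\<Omega> \<in> sets lebesgue" and v[measurable]: "v \<in> borel_measurable lebesgue"
  shows "ennreal (measure lebesgue {x\<in>\<Omega>. a < v x}) \<le> emeasure lebesgue {x\<in>\<Omega>. v x = 0}"
proof -
  define P where "P = {x\<in>\<Omega>. a < v x}"
  define Z where "Z = {x\<in>\<Omega>. v x = 0}"
  have [measurable]: "P \<in> sets lebesgue" "Z \<in> sets lebesgue" unfolding P_def Z_def by measurable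
  have "P \<subseteq> \<Omega>" "Z \<subseteq> \<Omega>" "P \<inter> Z = {}" using a by (auto simp: P_def Z_def)
  then have "emeasure lebesgue P \<le> emeasure lebesgue \<Omega>" "emeasure lebesgue Z \<le> emeasure lebesgue \<Omega>"
    using emeasure_mono[OF _ \<Omega>] by blast+
  then have fin_PZ: "emeasure lebesgue P \<noteq> top" "emeasure lebesgue Z \<noteq> top"
    using fin by (auto simp: top_unique)
  have fin_\<Omega>: "emeasure lebesgue \<Omega> \<noteq> top" using fin by simp
  have "measure lebesgue P + measure lebesgue Z = measure lebesgue (P \<union> Z)"
    using \<open>P \<inter> Z = {}\<close> fin_PZ by (intro measure_Union[symmetric]) (auto simp: less_top)
  also have "\<dots> \<le> measure lebesgue \<Omega>"
    using \<open>P \<subseteq> \<Omega>\<close> \<open>Z \<subseteq> \<Omega>\<close> fin by (intro measure_mono_fmeasurable) (auto simp: fmeasurable_def)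
  also have "measure lebesgue \<Omega> \<le> 2 * measure lebesgue Z"
  proof -
    have "emeasure lebesgue \<Omega> / 2 \<le> emeasure lebesgue Z"
      using adm fin unfolding admissible_on_def Z_def by blast
    moreover have "emeasure lebesgue \<Omega> = ennreal (measure lebesgue \<Omega>)"
      "emeasure lebesgue Z = ennreal (measure lebesgue Z)"
      using emeasure_eq_ennreal_measure[OF fin_\<Omega>] emeasure_eq_ennreal_measure[OF fin_PZ(2)] by blast+
    ultimately have "ennreal (measure lebesgue \<Omega>) / 2 \<le> ennreal (measure lebesgue Z)" by simp
    then have "measure lebesgue \<Omega> / 2 \<le> measure lebesgue Z"
      by (simp only: ennreal_divide_numeral[OF measure_nonneg] ennreal_le_iff[OF measure_nonneg])
    then show ?thesis by simp
  qed
  finally have "ennreal (measure lebesgue P) \<le> ennreal (measure lebesgue Z)" by simp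
  also have "\<dots> = emeasure lebesgue Z"
    using emeasure_eq_ennreal_measure[OF fin_PZ(2)] by simp
  finally show ?thesis unfolding P_def Z_def .
qed

lemma globally_regular_imp_sublevel_fills_balls:
  fixes \<Omega> :: "'a::euclidean_space set" and v :: "'a \<Rightarrow> real"
  assumes reg: "globally_regular \<theta> \<Omega>" and adm: "admissible_on \<Omega> v"
    and \<Omega>[measurable]: "\<Omega> \<in> sets lebesgue" and v[measurable]: "v \<in> borel_measurable lebesgue"
  shows "sublevel_fills_balls \<theta> \<Omega> v"
  unfolding sublevel_fills_balls_def
proof (intro ballI allI impI)
  fix x a r
  assume x: "x \<in> \<Omega>" and a: "0 < a" and r: "0 < r"
    and radius: "\<theta> * r ^ DIM('a) = 2 * measure lebesgue {y\<in>\<Omega>. a < v y}"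
  define P where "P = {y\<in>\<Omega>. a < v y}"
  define M where "M = measure lebesgue P"
  have [measurable]: "P \<in> sets lebesgue" unfolding P_def by measurable
  have [measurable]: "ball x r \<in> sets lebesgue" by (rule fmeasurableD[OF lmeasurable_ball])
  have PM: "emeasure lebesgue P = ennreal M"
    using adm a unfolding admissible_on_def M_def P_def by (simp add: emeasure_eq_ennreal_measure less_top)
  show "ennreal M \<le> emeasure lebesgue (ball x r \<inter> {y\<in>\<Omega>. v y \<le> a})"
    unfolding P_def[symmetric] M_def[symmetric]
  proof (cases "\<not> bounded \<Omega> \<or> r < 2 * diameter \<Omega>")
    case True
    have "ennreal M + ennreal M = ennreal (\<theta> * r ^ DIM('a))"
      using radius by (simp add: M_def P_def flip: ennreal_plus)
    also have "\<dots> \<le> emeasure lebesgue (ball x r \<inter> \<Omega>)"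
      using reg x r True unfolding globally_regular_def by blast
    also have "\<dots> \<le> emeasure lebesgue ((ball x r \<inter> {y\<in>\<Omega>. v y \<le> a}) \<union> P)"
      by (rule emeasure_mono) (auto simp: P_def)
    also have "\<dots> \<le> ennreal M + emeasure lebesgue (ball x r \<inter> {y\<in>\<Omega>. v y \<le> a})"
      using emeasure_subadditive[of "ball x r \<inter> {y\<in>\<Omega>. v y \<le> a}" lebesgue P] PM
      by (simp add: add.commute)
    finally show "ennreal M \<le> emeasure lebesgue (ball x r \<inter> {y\<in>\<Omega>. v y \<le> a})"
      by (simp add: ennreal_add_left_cancel_le)
  next
    case False
    then have "\<Omega> \<subseteq> ball x r"
      using x r diameter_bounded_bound[of \<Omega> x] by fastforce
    then have "emeasure lebesgue \<Omega> < \<infinity>"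
      using emeasure_mono[of \<Omega> "ball x r" lebesgue] emeasure_bounded_finite[of "ball x r"]
      by (simp add: less_top)
    then have "ennreal M \<le> emeasure lebesgue {y\<in>\<Omega>. v y = 0}"
      unfolding M_def P_def by (rule measure_superlevel_le_zero_set[OF adm _ a \<Omega> v])
    also have "\<dots> \<le> emeasure lebesgue (ball x r \<inter> {y\<in>\<Omega>. v y \<le> a})"
      using \<open>\<Omega> \<subseteq> ball x r\<close> a by (intro emeasure_mono) auto
    finally show "ennreal M \<le> emeasure lebesgue (ball x r \<inter> {y\<in>\<Omega>. v y \<le> a})" .
  qed
qed

lemma nn_integral_powr_le_of_modular_le_one:
  fixes \<Omega> :: "'a::euclidean_space set" and v :: "'a \<Rightarrow> real"
  assumes yf: "young_function \<phi>" and \<alpha>: "\<alpha> < 0" and upper: "upper_type DIM('a) (- \<alpha>) K \<phi>"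
    and \<theta>: "0 < \<theta>" and reg: "globally_regular \<theta> \<Omega>" and adm: "admissible_on \<Omega> v"
    and \<Omega>[measurable]: "\<Omega> \<in> sets lebesgue" and v[measurable]: "v \<in> borel_measurable lebesgue"
    and modular: "besov_modular \<alpha> \<phi> \<Omega> v 1 \<le> 1"
    and q: "q = DIM('a) / - \<alpha>" and C': "C' = 2 * K * (2 / \<theta>)\<^sup>2"
    and A\<^sub>0: "0 < A\<^sub>0" and large: "2 powr q * C' \<le> \<phi> (((2 / \<theta>) * (A\<^sub>0 / 2 powr q)) powr (1 / q))"
  shows "(\<integral>\<^sup>+x\<in>\<Omega>. ennreal (v x powr q) \<partial>lebesgue)
         \<le> ennreal (4 powr q * (A\<^sub>0 + 2 powr q * K * A\<^sub>0 * C' / \<phi> (((2 / \<theta>) * A\<^sub>0) powr (1 / q))))"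
proof -
  have fills: "sublevel_fills_balls \<theta> \<Omega> v"
    by (rule globally_regular_imp_sublevel_fills_balls[OF reg adm \<Omega> v])
  have nonneg: "\<forall>x\<in>\<Omega>. 0 \<le> v x" and fin: "\<forall>a>0. emeasure lebesgue {x\<in>\<Omega>. a < v x} < \<infinity>"
    using adm by (simp_all add: admissible_on_def)
  have "ennreal (v x powr q) * indicator \<Omega> x = ennreal (v x powr q) * indicator {x\<in>\<Omega>. 0 < v x} x" for x
  proof (cases "x \<in> \<Omega>")
    case True
    then have "v x = 0 \<or> 0 < v x" using nonneg by force
    then show ?thesis using True by auto
  qed simp
  then have "(\<integral>\<^sup>+x\<in>\<Omega>. ennreal (v x powr q) \<partial>lebesgue)
      = (\<integral>\<^sup>+x\<in>{x\<in>\<Omega>. 0 < v x}. ennreal (v x powr q) \<partial>lebesgue)"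
    by simp
  also have "\<dots> \<le> ennreal (4 powr q * (A\<^sub>0 + 2 powr q * K * A\<^sub>0 * C' / \<phi> (((2 / \<theta>) * A\<^sub>0) powr (1 / q))))"
  proof (rule nn_integral_superlevel_limit_le[OF _ v \<Omega>])
    show "(\<lambda>x. ennreal (v x powr q)) \<in> borel_measurable lebesgue" by measurable
  next
    fix \<epsilon> :: real
    assume "0 < \<epsilon>"
    then show "(\<integral>\<^sup>+x\<in>{x\<in>\<Omega>. \<epsilon> < v x}. ennreal (v x powr q) \<partial>lebesgue)
        \<le> ennreal (4 powr q * (A\<^sub>0 + 2 powr q * K * A\<^sub>0 * C' / \<phi> (((2 / \<theta>) * A\<^sub>0) powr (1 / q))))"
      using superlevel_powr_integral_le[OF yf \<alpha> upper \<theta> fills \<Omega> v fin modular q C' A\<^sub>0 large, of "\<epsilon> / 2"]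
      by simp
  qed
  finally show ?thesis .
qed

lemma Lq_bound_of_unit_modular:
  fixes \<phi> :: "real \<Rightarrow> real" and \<alpha> \<theta> K :: real
  assumes yf: "young_function \<phi>" and \<alpha>: "\<alpha> < 0" and \<theta>: "0 < \<theta>"
    and upper: "upper_type DIM('a::euclidean_space) (- \<alpha>) K \<phi>"
  obtains B where "0 < B"
    and "\<And>(\<Omega> :: 'a set) v. \<Omega> \<in> sets lebesgue \<Longrightarrow> v \<in> borel_measurable lebesgue \<Longrightarrow>
      globally_regular \<theta> \<Omega> \<Longrightarrow> admissible_on \<Omega> v \<Longrightarrow> besov_modular \<alpha> \<phi> \<Omega> v 1 \<le> 1 \<Longrightarrow>
      (\<integral>\<^sup>+x\<in>\<Omega>. ennreal (v x powr (real DIM('a) / \<bar>\<alpha>\<bar>)) \<partial>lebesgue) \<le> ennreal B"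
proof -
  define q where "q = real DIM('a) / \<bar>\<alpha>\<bar>"
  have q_neg: "q = real DIM('a) / - \<alpha>" using \<alpha> by (simp add: q_def)
  have q: "0 < q" unfolding q_def using \<alpha> by (intro divide_pos_pos) auto
  define C' where "C' = 2 * K * (2 / \<theta>)\<^sup>2"
  have K: "1 \<le> K" using upper_type_ge_one[OF yf upper] .
  obtain z where z: "0 < z" "2 powr q * C' \<le> \<phi> z" using young_function_exceeds[OF yf] by blast
  define A\<^sub>0 where "A\<^sub>0 = 2 powr q * (\<theta> / 2) * z powr q"
  have A\<^sub>0: "0 < A\<^sub>0" unfolding A\<^sub>0_def using \<theta> z by simp
  have "(2 / \<theta>) * (A\<^sub>0 / 2 powr q) = z powr q" unfolding A\<^sub>0_def using \<theta> by simp
  then have "((2 / \<theta>) * (A\<^sub>0 / 2 powr q)) powr (1 / q) = z" using z q by (simp add: powr_powr)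
  then have large: "2 powr q * C' \<le> \<phi> (((2 / \<theta>) * (A\<^sub>0 / 2 powr q)) powr (1 / q))" using z by simp
  define B where "B = 4 powr q * (A\<^sub>0 + 2 powr q * K * A\<^sub>0 * C' / \<phi> (((2 / \<theta>) * A\<^sub>0) powr (1 / q)))"
  have "0 \<le> 2 powr q * K * A\<^sub>0 * C' / \<phi> (((2 / \<theta>) * A\<^sub>0) powr (1 / q))"
    unfolding C'_def using A\<^sub>0 K
    by (intro divide_nonneg_nonneg mult_nonneg_nonneg young_function_nonneg[OF yf]) auto
  then have B: "0 < B" unfolding B_def using A\<^sub>0 by (intro mult_pos_pos) auto
  show ?thesis
    using that[OF B] nn_integral_powr_le_of_modular_le_one[OF yf \<alpha> upper \<theta> _ _ _ _ _ q_neg C'_def A\<^sub>0 large]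
    unfolding B_def q_def by blast
qed

lemma besov_modular_scale:
  fixes u v :: "'a::euclidean_space \<Rightarrow> real"
  assumes t: "0 < t" and v: "\<And>x. x \<in> \<Omega> \<Longrightarrow> v x = u x / t"
  shows "besov_modular \<alpha> \<phi> \<Omega> v 1 = besov_modular \<alpha> \<phi> \<Omega> u t"
proof -
  have arg: "\<bar>v x - v y\<bar> / dist x y powr \<alpha> = \<bar>u x - u y\<bar> / (t * dist x y powr \<alpha>)"
    if "x \<in> \<Omega>" "y \<in> \<Omega>" for x y
    using t by (simp add: v[OF that(1)] v[OF that(2)] diff_divide_distrib[symmetric])
  have inner: "(\<integral>\<^sup>+y\<in>\<Omega>. ennreal (\<phi> (\<bar>v x - v y\<bar> / dist x y powr \<alpha>) / dist x y ^ (2 * DIM('a))) \<partial>lebesgue)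
      = (\<integral>\<^sup>+y\<in>\<Omega>. ennreal (\<phi> (\<bar>u x - u y\<bar> / (t * dist x y powr \<alpha>)) / dist x y ^ (2 * DIM('a))) \<partial>lebesgue)"
    if "x \<in> \<Omega>" for x
    using arg[OF that] by (intro nn_integral_cong) (simp split: split_indicator)
  show ?thesis
    unfolding besov_modular_def by (intro nn_integral_cong) (simp add: inner split: split_indicator)
qed

lemma nn_integral_abs_powr_le_by_scaling:
  fixes u :: "'a::euclidean_space \<Rightarrow> real"
  assumes unit: "\<And>v. v \<in> borel_measurable lebesgue \<Longrightarrow> admissible_on \<Omega> v \<Longrightarrow>
      besov_modular \<alpha> \<phi> \<Omega> v 1 \<le> 1 \<Longrightarrow> (\<integral>\<^sup>+x\<in>\<Omega>. ennreal (v x powr q) \<partial>lebesgue) \<le> ennreal B"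
    and \<Omega>[measurable]: "\<Omega> \<in> sets lebesgue"
    and u: "set_borel_measurable lebesgue \<Omega> u" and adm: "admissible_on \<Omega> u"
    and t: "0 < t" and modular: "besov_modular \<alpha> \<phi> \<Omega> u t \<le> 1" and B: "0 \<le> B"
  shows "(\<integral>\<^sup>+x\<in>\<Omega>. ennreal (\<bar>u x\<bar> powr q) \<partial>lebesgue) \<le> ennreal (t powr q * B)"
proof -
  define v where "v x = indicator \<Omega> x * u x / t" for x
  have v\<Omega>: "v x = u x / t" if "x \<in> \<Omega>" for x using that by (simp add: v_def)
  have "(\<lambda>x. indicator \<Omega> x * u x) \<in> borel_measurable lebesgue"
    using u unfolding set_borel_measurable_def by simp
  then have [measurable]: "v \<in> borel_measurable lebesgue" unfolding v_def by measurable
  have bound: "(\<integral>\<^sup>+x\<in>\<Omega>. ennreal (v x powr q) \<partial>lebesgue) \<le> ennreal B"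
    using admissible_on_scale[where v = v, OF adm t v\<Omega>]
      besov_modular_scale[where \<Omega> = \<Omega> and v = v and u = u, OF t v\<Omega>] modular
    by (intro unit) auto
  have "(\<integral>\<^sup>+x\<in>\<Omega>. ennreal (\<bar>u x\<bar> powr q) \<partial>lebesgue)
      = (\<integral>\<^sup>+x. ennreal (t powr q) * (ennreal (v x powr q) * indicator \<Omega> x) \<partial>lebesgue)"
  proof (rule nn_integral_cong)
    fix x
    show "ennreal (\<bar>u x\<bar> powr q) * indicator \<Omega> x = ennreal (t powr q) * (ennreal (v x powr q) * indicator \<Omega> x)"
    proof (cases "x \<in> \<Omega>")
      case True
      then have "\<bar>u x\<bar> = t * v x" using v\<Omega> adm t by (simp add: admissible_on_def)
      then show ?thesis using True by (simp add: powr_mult ennreal_mult)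
    qed simp
  qed
  also have "\<dots> = ennreal (t powr q) * (\<integral>\<^sup>+x\<in>\<Omega>. ennreal (v x powr q) \<partial>lebesgue)"
    by (rule nn_integral_cmult) measurable
  also have "\<dots> \<le> ennreal (t powr q) * ennreal B" using bound by (rule mult_left_mono) simp
  also have "\<dots> = ennreal (t powr q * B)" by (simp add: ennreal_mult')
  finally show ?thesis .
qed

lemma Lp_norm_le_besov_norm:
  fixes u :: "'a::euclidean_space \<Rightarrow> real"
  assumes unit: "\<And>v. v \<in> borel_measurable lebesgue \<Longrightarrow> admissible_on \<Omega> v \<Longrightarrow>
      besov_modular \<alpha> \<phi> \<Omega> v 1 \<le> 1 \<Longrightarrow> (\<integral>\<^sup>+x\<in>\<Omega>. ennreal (v x powr q) \<partial>lebesgue) \<le> ennreal B"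
    and q: "0 < q" and B: "0 < B" and \<Omega>: "\<Omega> \<in> sets lebesgue"
    and u: "in_besov \<alpha> \<phi> \<Omega> u" and adm: "admissible_on \<Omega> u"
  shows "Lp_norm \<Omega> q u \<le> ennreal (B powr (1 / q) * besov_norm \<alpha> \<phi> \<Omega> u)"
proof -
  have bound: "(\<integral>\<^sup>+x\<in>\<Omega>. ennreal (\<bar>u x\<bar> powr q) \<partial>lebesgue) \<le> ennreal (t powr q * B)"
    if "0 < t" "besov_modular \<alpha> \<phi> \<Omega> u t \<le> 1" for t
    using u B that by (intro nn_integral_abs_powr_le_by_scaling[OF unit \<Omega> _ adm]) (auto simp: in_besov_def)
  define S where "S = {t. 0 < t \<and> besov_modular \<alpha> \<phi> \<Omega> u t \<le> 1}"
  define I where "I = (\<integral>\<^sup>+x\<in>\<Omega>. ennreal (\<bar>u x\<bar> powr q) \<partial>lebesgue)"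
  have S: "S \<noteq> {}" using u unfolding in_besov_def S_def by auto
  then obtain t\<^sub>0 where "t\<^sub>0 \<in> S" by blast
  then have "I \<noteq> \<infinity>"
    using bound[of t\<^sub>0] unfolding S_def I_def by (auto simp: top_unique)
  then obtain r where I: "I = ennreal r" and r: "0 \<le> r" by (cases I) auto
  have Lp: "Lp_norm \<Omega> q u = ennreal (r powr (1 / q))"
    unfolding Lp_norm_def Let_def I_def[symmetric] I using r by simp
  have "r powr (1 / q) / B powr (1 / q) \<le> t" if "t \<in> S" for t
  proof -
    have t: "0 < t" using that by (simp add: S_def)
    have "ennreal r \<le> ennreal (t powr q * B)" using bound that unfolding S_def I_def[symmetric] I by simp
    then have "r \<le> t powr q * B" using t B by (simp add: ennreal_le_iff)
    then have "r powr (1 / q) \<le> (t powr q * B) powr (1 / q)" using r q by (intro powr_mono2) auto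
    also have "\<dots> = t * B powr (1 / q)" using t q by (simp add: powr_mult powr_powr)
    finally show ?thesis using B by (simp add: divide_le_eq)
  qed
  then have "r powr (1 / q) / B powr (1 / q) \<le> Inf S" by (rule cInf_greatest[OF S])
  then show ?thesis
    unfolding Lp besov_norm_def S_def[symmetric] using B by (simp add: divide_le_eq mult.commute ennreal_leI)
qed

theorem lemma3p1:
  fixes \<alpha> \<theta> :: real and \<phi> :: "real \<Rightarrow> real"
  assumes "DIM('a::euclidean_space) \<ge> 2"
    and "- real DIM('a) < \<alpha>" and "\<alpha> < 0"
    and "young_function \<phi>"
    and "Lambda_lower DIM('a) \<phi> \<alpha> < \<infinity>"
    and "Lambda_upper DIM('a) \<phi> \<alpha> < \<infinity>"
    and "0 < \<theta>" and "\<theta> < 1"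
  shows "\<exists>C>0. \<forall>(\<Omega>::'a set) u.
     open \<Omega> \<and> connected \<Omega> \<and> \<Omega> \<noteq> {} \<and> globally_regular \<theta> \<Omega> \<and>
     in_besov \<alpha> \<phi> \<Omega> u \<and>
     (emeasure lebesgue \<Omega> < \<infinity> \<longrightarrow>
        (\<forall>x\<in>\<Omega>. u x \<ge> 0) \<and>
        emeasure lebesgue {x\<in>\<Omega>. u x = 0} \<ge> emeasure lebesgue \<Omega> / 2) \<and>
     (emeasure lebesgue \<Omega> = \<infinity> \<longrightarrow>
        (\<forall>x\<in>\<Omega>. u x \<ge> 0) \<and>
        (\<forall>a>0. emeasure lebesgue {x\<in>\<Omega>. u x > a} < \<infinity>))
     \<longrightarrow> Lp_norm \<Omega> (real DIM('a) / \<bar>\<alpha>\<bar>) u \<le> ennreal (C * besov_norm \<alpha> \<phi> \<Omega> u)"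
proof -
  note yf = \<open>young_function \<phi>\<close> and \<alpha> = \<open>\<alpha> < 0\<close> and \<theta> = \<open>0 < \<theta>\<close>
  obtain K where upper: "upper_type DIM('a) (- \<alpha>) K \<phi>"
    using Lambda_upper_imp_upper_type[OF yf \<alpha> \<open>Lambda_upper DIM('a) \<phi> \<alpha> < \<infinity>\<close>] .
  obtain B where B: "0 < B" and unit: "\<And>(\<Omega> :: 'a set) v. \<Omega> \<in> sets lebesgue \<Longrightarrow>
      v \<in> borel_measurable lebesgue \<Longrightarrow> globally_regular \<theta> \<Omega> \<Longrightarrow> admissible_on \<Omega> v \<Longrightarrow>
      besov_modular \<alpha> \<phi> \<Omega> v 1 \<le> 1 \<Longrightarrow>
      (\<integral>\<^sup>+x\<in>\<Omega>. ennreal (v x powr (real DIM('a) / \<bar>\<alpha>\<bar>)) \<partial>lebesgue) \<le> ennreal B"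
    using Lq_bound_of_unit_modular[OF yf \<alpha> \<theta> upper] by blast
  have q: "0 < real DIM('a) / \<bar>\<alpha>\<bar>" using \<alpha> by (intro divide_pos_pos) auto
  show ?thesis
  proof (intro exI[of _ "B powr (1 / (real DIM('a) / \<bar>\<alpha>\<bar>))"] conjI allI impI)
    show "0 < B powr (1 / (real DIM('a) / \<bar>\<alpha>\<bar>))" using B by simp
  next
    fix \<Omega> :: "'a set" and u :: "'a \<Rightarrow> real"
    assume H: "open \<Omega> \<and> connected \<Omega> \<and> \<Omega> \<noteq> {} \<and> globally_regular \<theta> \<Omega> \<and> in_besov \<alpha> \<phi> \<Omega> u \<and>
      (emeasure lebesgue \<Omega> < \<infinity> \<longrightarrow>
        (\<forall>x\<in>\<Omega>. u x \<ge> 0) \<and> emeasure lebesgue {x\<in>\<Omega>. u x = 0} \<ge> emeasure lebesgue \<Omega> / 2) \<and>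
      (emeasure lebesgue \<Omega> = \<infinity> \<longrightarrow>
        (\<forall>x\<in>\<Omega>. u x \<ge> 0) \<and> (\<forall>a>0. emeasure lebesgue {x\<in>\<Omega>. u x > a} < \<infinity>))"
    then have "open \<Omega>" and reg: "globally_regular \<theta> \<Omega>" and u: "in_besov \<alpha> \<phi> \<Omega> u" by blast+
    then have \<Omega>: "\<Omega> \<in> sets lebesgue"
      using sets_completionI_sets[of \<Omega> lborel] borel_open by simp
    have adm: "admissible_on \<Omega> u" using H by (intro admissible_onI[OF \<Omega>]) blast+
    show "Lp_norm \<Omega> (real DIM('a) / \<bar>\<alpha>\<bar>) u
        \<le> ennreal (B powr (1 / (real DIM('a) / \<bar>\<alpha>\<bar>)) * besov_norm \<alpha> \<phi> \<Omega> u)"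
      by (rule Lp_norm_le_besov_norm[OF unit[OF \<Omega> _ reg] q B \<Omega> u adm])
  qed
qed

end
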